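(* Let $\mathcal H$ be a finite-dimensional Hilbert space, let $P$ be an orthogonal projection on $\mathcal H$, and let $\mathcal E$ be a channel on $\mathcal L(\mathcal H)$ with operation elements $\{E_a\}$, i.e. $\mathcal E(\rho)=\sum_a E_a\rho E_a^\dagger$ with $\sum_a E_a^\dagger E_a={\bf 1}$. Let $\mathcal A$ be a subalgebra of $\mathcal L(P\mathcal H)$ closed under Hermitian conjugation, where operators on $P\mathcal H$ are regarded as operators $X$ on $\mathcal H$ with $X=PXP$ ($\mathcal A$ need not contain $P$). Then $\mathcal A$ is correctable for $\mathcal E$ on states in $P\mathcal H$, i.e. there exists a channel $\mathcal R$ on $\mathcal L(\mathcal H)$ such that $$P\,(\mathcal R\circ\mathcal E)^\dagger(X)\,P = PXP\quad\text{for all }X\in\mathcal A,$$ if and only if $$[P E_c^\dagger E_b P,\, X]=0\quad\text{for all } X\in\mathcal A \text{ and all indices } b,c.$$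
   Context: $\mathcal L(\mathcal K)$ denotes the set of all linear operators on a Hilbert space $\mathcal K$. A channel is a completely positive trace-preserving linear map on $\mathcal L(\mathcal H)$; for a channel $\mathcal F(\rho)=\sum_a F_a\rho F_a^\dagger$ its dual (Heisenberg-picture) map is $\mathcal F^\dagger(X)=\sum_a F_a^\dagger X F_a$, characterized by $\mathrm{Tr}(\rho\,\mathcal F^\dagger(X))=\mathrm{Tr}(\mathcal F(\rho)X)$; in particular $(\mathcal R\circ\mathcal E)^\dagger=\mathcal E^\dagger\circ\mathcal R^\dagger$. *)

theory Defs
  imports "Jordan_Normal_Form.Schur_Decomposition"
begin

text \<open>The Hilbert space H is C^n; operators on H are n x n complex matrices
(carrier_mat n n). Hermitian conjugation is mat_adjoint.\<close>

definition msum :: "nat \<Rightarrow> complex mat list \<Rightarrow> complex mat" where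
  "msum n xs = foldr (+) xs (0\<^sub>m n n)"

definition mtrace :: "complex mat \<Rightarrow> complex" where
  "mtrace A = (\<Sum>i < dim_row A. A $$ (i, i))"

definition psd :: "nat \<Rightarrow> complex mat \<Rightarrow> bool" where
  "psd n M \<longleftrightarrow> M \<in> carrier_mat n n \<and> mat_adjoint M = M \<and>
     (\<forall>v \<in> carrier_vec n. 0 \<le> Re (conjugate v \<bullet> (M *\<^sub>v v)))"

text \<open>Ampliation id_k tensor Phi, acting blockwise on (k n) x (k n) matrices.\<close>
definition ampl :: "nat \<Rightarrow> nat \<Rightarrow> (complex mat \<Rightarrow> complex mat) \<Rightarrow> complex mat \<Rightarrow> complex mat" where
  "ampl k n \<Phi> M = mat (k * n) (k * n) (\<lambda>(p, q).
      \<Phi> (mat n n (\<lambda>(r, s). M $$ (p div n * n + r, q div n * n + s))) $$ (p mod n, q mod n))"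

definition linear_map_mat :: "nat \<Rightarrow> (complex mat \<Rightarrow> complex mat) \<Rightarrow> bool" where
  "linear_map_mat n \<Phi> \<longleftrightarrow>
     (\<forall>A \<in> carrier_mat n n. \<Phi> A \<in> carrier_mat n n) \<and>
     (\<forall>A \<in> carrier_mat n n. \<forall>B \<in> carrier_mat n n. \<Phi> (A + B) = \<Phi> A + \<Phi> B) \<and>
     (\<forall>c. \<forall>A \<in> carrier_mat n n. \<Phi> (c \<cdot>\<^sub>m A) = c \<cdot>\<^sub>m \<Phi> A)"

definition completely_positive :: "nat \<Rightarrow> (complex mat \<Rightarrow> complex mat) \<Rightarrow> bool" where
  "completely_positive n \<Phi> \<longleftrightarrow>
     (\<forall>k M. psd (k * n) M \<longrightarrow> psd (k * n) (ampl k n \<Phi> M))"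

definition trace_preserving :: "nat \<Rightarrow> (complex mat \<Rightarrow> complex mat) \<Rightarrow> bool" where
  "trace_preserving n \<Phi> \<longleftrightarrow> (\<forall>A \<in> carrier_mat n n. mtrace (\<Phi> A) = mtrace A)"

definition channel :: "nat \<Rightarrow> (complex mat \<Rightarrow> complex mat) \<Rightarrow> bool" where
  "channel n \<Phi> \<longleftrightarrow> linear_map_mat n \<Phi> \<and> completely_positive n \<Phi> \<and> trace_preserving n \<Phi>"

definition dual_map :: "nat \<Rightarrow> (complex mat \<Rightarrow> complex mat) \<Rightarrow> complex mat \<Rightarrow> complex mat" where
  "dual_map n \<Phi> X = (THE Y. Y \<in> carrier_mat n n \<and>
      (\<forall>\<rho> \<in> carrier_mat n n. mtrace (\<rho> * Y) = mtrace (\<Phi> \<rho> * X)))"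

definition kraus_map :: "nat \<Rightarrow> complex mat list \<Rightarrow> complex mat \<Rightarrow> complex mat" where
  "kraus_map n Es \<rho> = msum n (map (\<lambda>E. E * \<rho> * mat_adjoint E) Es)"

definition orth_proj :: "nat \<Rightarrow> complex mat \<Rightarrow> bool" where
  "orth_proj n P \<longleftrightarrow> P \<in> carrier_mat n n \<and> P * P = P \<and> mat_adjoint P = P"

definition star_subalgebra_on :: "nat \<Rightarrow> complex mat \<Rightarrow> complex mat set \<Rightarrow> bool" where
  "star_subalgebra_on n P \<A> \<longleftrightarrow>
     \<A> \<subseteq> carrier_mat n n \<and>
     (\<forall>X \<in> \<A>. P * X * P = X) \<and>
     0\<^sub>m n n \<in> \<A> \<and>
     (\<forall>X \<in> \<A>. \<forall>Y \<in> \<A>. X + Y \<in> \<A>) \<and>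
     (\<forall>c. \<forall>X \<in> \<A>. c \<cdot>\<^sub>m X \<in> \<A>) \<and>
     (\<forall>X \<in> \<A>. \<forall>Y \<in> \<A>. X * Y \<in> \<A>) \<and>
     (\<forall>X \<in> \<A>. mat_adjoint X \<in> \<A>)"

end

(* Necessity.  By Choi's theorem the recovery channel R has Kraus operators K with
   \<Sum> K\<dagger> K = 1, so the dual of R \<circ> E has the unital Kraus family F = K E_a.  Its compression by
   P fixes X, X\<dagger> and X\<dagger> X for X in the algebra, which forces \<Sum> Z\<dagger> Z = 0 for Z = F P X - X F P;
   hence every F P commutes with X and X\<dagger>, and inserting 1 = \<Sum> K\<dagger> K between E_c\<dagger> and E_b
   shows that P E_c\<dagger> E_b P commutes with X.

   Sufficiency.  Stack the operators E_a P into the row S = (E_1 P, ..., E_m P), a map from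
   C^m \<otimes> C^n to C^n.  The hypothesis says that the Gram matrix S\<dagger> S commutes with 1 \<otimes> X, hence
   so does its square root B.  In the polar decomposition S = U B the partial isometry U yields a
   recovery channel: its Kraus operators are the adjoints of the n x n blocks of U together with
   the projection onto the complement of the range of U.  Then P (R \<circ> E)\<dagger>(X) P is the partial
   trace of S\<dagger> U (1 \<otimes> X) U\<dagger> S = B (1 \<otimes> X) B = (1 \<otimes> X) S\<dagger> S, which is X P = P X P. *)

theory Submission
  imports Defs "Jordan_Normal_Form.Spectral_Radius"
begin

type_synonym cmat = "complex mat"

lemma adjoint_dims[simp]: "dim_row (mat_adjoint A) = dim_col A" "dim_col (mat_adjoint A) = dim_row A"
  unfolding mat_adjoint_def by (auto simp: mat_of_rows_def)

lemma adjoint_index[simp]: "i < dim_col A \<Longrightarrow> j < dim_row A \<Longrightarrow> mat_adjoint A $$ (i,j) = cnj (A $$ (j,i))"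
  unfolding mat_adjoint_def by (simp add: mat_of_rows_def conjugate_complex_def)

lemma adjoint_carrier[simp]: "A \<in> carrier_mat r c \<Longrightarrow> mat_adjoint A \<in> carrier_mat c r"
  unfolding carrier_mat_def by simp

lemma index_mult_sum: "i < dim_row A \<Longrightarrow> j < dim_col B \<Longrightarrow> dim_col A = dim_row B \<Longrightarrow>
  (A * B) $$ (i,j) = (\<Sum>k<dim_row B. A $$ (i,k) * B $$ (k,j))"
  by (simp add: scalar_prod_def atLeast0LessThan)

lemma index_mult_sum': "A \<in> carrier_mat r m \<Longrightarrow> B \<in> carrier_mat m c \<Longrightarrow> i < r \<Longrightarrow> j < c \<Longrightarrow>
  (A * B) $$ (i,j) = (\<Sum>k<m. A $$ (i,k) * B $$ (k,j))"
  by (simp add: scalar_prod_def atLeast0LessThan)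

lemma adjoint_adjoint[simp]: "mat_adjoint (mat_adjoint (A::cmat)) = A"
  by (rule eq_matI) auto

lemma adjoint_mult: "(A::cmat) \<in> carrier_mat r k \<Longrightarrow> B \<in> carrier_mat k c \<Longrightarrow>
   mat_adjoint (A * B) = mat_adjoint B * mat_adjoint A"
  by (rule eq_matI) (auto simp: index_mult_sum mult.commute sum_conjugate simp del: index_mult_mat(1))

lemma adjoint_mult_sq[simp]:
  "(A::cmat) \<in> carrier_mat n n \<Longrightarrow> B \<in> carrier_mat n n \<Longrightarrow> mat_adjoint (A * B) = mat_adjoint B * mat_adjoint A"
  by (rule adjoint_mult)

lemma adjoint_add: "(A::cmat) \<in> carrier_mat r c \<Longrightarrow> B \<in> carrier_mat r c \<Longrightarrow>
   mat_adjoint (A + B) = mat_adjoint A + mat_adjoint B"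
  by (rule eq_matI) auto

lemma adjoint_one[simp]: "mat_adjoint (1\<^sub>m n :: cmat) = 1\<^sub>m n"
  by (rule eq_matI) auto

lemma adjoint_minus: "(A::cmat) \<in> carrier_mat r c \<Longrightarrow> B \<in> carrier_mat r c \<Longrightarrow>
   mat_adjoint (A - B) = mat_adjoint A - mat_adjoint B"
  by (rule eq_matI) auto

lemma mtrace_mult_comm:
  assumes "(A::cmat) \<in> carrier_mat r c" "B \<in> carrier_mat c r"
  shows "mtrace (A * B) = mtrace (B * A)"
proof -
  have "mtrace (A * B) = (\<Sum>i<r. \<Sum>k<c. A $$ (i,k) * B $$ (k,i))"
    using assms unfolding mtrace_def by (auto simp: index_mult_sum simp del: index_mult_mat(1))
  also have "\<dots> = (\<Sum>k<c. \<Sum>i<r. B $$ (k,i) * A $$ (i,k))"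
    by (subst sum.swap) (simp add: mult.commute)
  also have "\<dots> = mtrace (B * A)"
    using assms unfolding mtrace_def by (auto simp: index_mult_sum simp del: index_mult_mat(1))
  finally show ?thesis .
qed

lemma mtrace_add: "(A::cmat) \<in> carrier_mat n n \<Longrightarrow> B \<in> carrier_mat n n \<Longrightarrow>
   mtrace (A + B) = mtrace A + mtrace B"
  unfolding mtrace_def by (auto simp: sum.distrib)

lemma mtrace_zero[simp]: "mtrace (0\<^sub>m n n :: cmat) = 0"
  unfolding mtrace_def by auto

lemma mult_carrier_sq[simp]: "A \<in> carrier_mat n n \<Longrightarrow> B \<in> carrier_mat n n \<Longrightarrow> A * B \<in> carrier_mat n n"
  by (rule mult_carrier_mat)

lemma assoc_mult_sq[simp]: "A \<in> carrier_mat n n \<Longrightarrow> B \<in> carrier_mat n n \<Longrightarrow> C \<in> carrier_mat n n \<Longrightarrow> A * B * C = A * (B * C)"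
  by (rule assoc_mult_mat)

lemma msum_Nil[simp]: "msum n [] = 0\<^sub>m n n" unfolding msum_def by simp
lemma msum_Cons[simp]: "msum n (x # xs) = x + msum n xs" unfolding msum_def by simp

lemma msum_carrier[simp]:
  assumes "\<And>x. x \<in> set xs \<Longrightarrow> x \<in> carrier_mat n n"
  shows "msum n xs \<in> carrier_mat n n"
  using assms by (induct xs) auto

lemma msum_map_carrier[simp]: "\<forall>x\<in>set xs. f x \<in> carrier_mat n n \<Longrightarrow> msum n (map f xs) \<in> carrier_mat n n"
  by (rule msum_carrier) auto

lemma msum_index:
  assumes "\<And>x. x \<in> set xs \<Longrightarrow> x \<in> carrier_mat n n" "i < n" "j < n"
  shows "msum n xs $$ (i,j) = sum_list (map (\<lambda>x. x $$ (i,j)) xs)"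
  using assms(1)
proof (induct xs)
  case Nil then show ?case using assms by simp
next
  case (Cons x xs)
  have c: "msum n xs \<in> carrier_mat n n" "x \<in> carrier_mat n n" using Cons by auto
  have ih: "msum n xs $$ (i,j) = sum_list (map (\<lambda>x. x $$ (i,j)) xs)" using Cons by auto
  show ?case using c ih assms(2,3) by (simp add: carrier_matD)
qed

declare minus_carrier_mat[simp]

lemma msum_map_index:
  assumes "\<And>x. x \<in> set xs \<Longrightarrow> f x \<in> carrier_mat n n" "i < n" "j < n"
  shows "msum n (map f xs) $$ (i,j) = (\<Sum>x\<leftarrow>xs. f x $$ (i,j))"
  by (subst msum_index[OF _ assms(2,3)]) (use assms(1) in \<open>auto simp: comp_def\<close>)

lemma msum_append:
  assumes "\<And>x. x \<in> set xs \<Longrightarrow> x \<in> carrier_mat n n" "\<And>x. x \<in> set ys \<Longrightarrow> x \<in> carrier_mat n n"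
  shows "msum n (xs @ ys) = msum n xs + msum n ys"
  using assms
proof (induct xs)
  case Nil then show ?case by (simp add: msum_carrier)
next
  case (Cons x xs)
  have c: "msum n xs \<in> carrier_mat n n" "msum n ys \<in> carrier_mat n n" "x \<in> carrier_mat n n" using Cons by auto
  have ih: "msum n (xs @ ys) = msum n xs + msum n ys" using Cons by auto
  show ?case using c ih by (simp add: assoc_add_mat)
qed

lemma msum_mult_left:
  assumes "Y \<in> carrier_mat n n" "\<And>x. x \<in> set xs \<Longrightarrow> f x \<in> carrier_mat n n"
  shows "Y * msum n (map f xs) = msum n (map (\<lambda>x. Y * f x) xs)"
  using assms(2)
proof (induct xs)
  case Nil then show ?case using assms(1) by simp
next
  case (Cons x xs)
  have c: "msum n (map f xs) \<in> carrier_mat n n" "f x \<in> carrier_mat n n" using Cons by (auto intro!: msum_map_carrier)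
  have ih: "Y * msum n (map f xs) = msum n (map (\<lambda>x. Y * f x) xs)" using Cons by auto
  show ?case using c ih assms(1) by (simp add: mult_add_distrib_mat)
qed

lemma msum_mult_right:
  assumes "Y \<in> carrier_mat n n" "\<And>x. x \<in> set xs \<Longrightarrow> f x \<in> carrier_mat n n"
  shows "msum n (map f xs) * Y = msum n (map (\<lambda>x. f x * Y) xs)"
  using assms(2)
proof (induct xs)
  case Nil then show ?case using assms(1) by simp
next
  case (Cons x xs)
  have c: "msum n (map f xs) \<in> carrier_mat n n" "f x \<in> carrier_mat n n" using Cons by (auto intro!: msum_map_carrier)
  have ih: "msum n (map f xs) * Y = msum n (map (\<lambda>x. f x * Y) xs)" using Cons by auto
  show ?case using c ih assms(1) by (simp add: add_mult_distrib_mat)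
qed

lemma msum_add:
  assumes f: "\<And>x. x \<in> set xs \<Longrightarrow> f x \<in> carrier_mat n n" and g: "\<And>x. x \<in> set xs \<Longrightarrow> g x \<in> carrier_mat n n"
  shows "msum n (map (\<lambda>x. f x + g x) xs) = msum n (map f xs) + msum n (map g xs)"
proof -
  have fg: "\<And>x. x \<in> set xs \<Longrightarrow> f x + g x \<in> carrier_mat n n" using f g by auto
  have c: "msum n (map f xs) \<in> carrier_mat n n" "msum n (map g xs) \<in> carrier_mat n n"
     "msum n (map (\<lambda>x. f x + g x) xs) \<in> carrier_mat n n"
    using f g fg by (auto intro!: msum_map_carrier)
  show ?thesis
  proof (rule eq_matI)
    fix i j assume "i < dim_row (msum n (map f xs) + msum n (map g xs))" "j < dim_col (msum n (map f xs) + msum n (map g xs))"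
    then have ij: "i < n" "j < n" using c by auto
    have e: "(f x + g x) $$ (i,j) = f x $$ (i,j) + g x $$ (i,j)" if "x \<in> set xs" for x
      using f[OF that] g[OF that] ij by auto
    show "msum n (map (\<lambda>x. f x + g x) xs) $$ (i, j) = (msum n (map f xs) + msum n (map g xs)) $$ (i, j)"
      using c ij by (simp add: msum_map_index[OF fg ij] msum_map_index[OF f ij] msum_map_index[OF g ij] sum_list_addf e
          cong: map_cong)
  qed (use c in auto)
qed

lemma msum_minus:
  assumes f: "\<And>x. x \<in> set xs \<Longrightarrow> f x \<in> carrier_mat n n" and g: "\<And>x. x \<in> set xs \<Longrightarrow> g x \<in> carrier_mat n n"
  shows "msum n (map (\<lambda>x. f x - g x) xs) = msum n (map f xs) - msum n (map g xs)"
proof -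
  have fg: "\<And>x. x \<in> set xs \<Longrightarrow> f x - g x \<in> carrier_mat n n" using f g by auto
  have c: "msum n (map f xs) \<in> carrier_mat n n" "msum n (map g xs) \<in> carrier_mat n n"
     "msum n (map (\<lambda>x. f x - g x) xs) \<in> carrier_mat n n"
    using f g fg by (auto intro!: msum_map_carrier)
  show ?thesis
  proof (rule eq_matI)
    fix i j assume "i < dim_row (msum n (map f xs) - msum n (map g xs))" "j < dim_col (msum n (map f xs) - msum n (map g xs))"
    then have ij: "i < n" "j < n" using c by auto
    have e: "(f x - g x) $$ (i,j) = f x $$ (i,j) - g x $$ (i,j)" if "x \<in> set xs" for x
      using f[OF that] g[OF that] ij by auto
    show "msum n (map (\<lambda>x. f x - g x) xs) $$ (i, j) = (msum n (map f xs) - msum n (map g xs)) $$ (i, j)"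
      using c ij by (simp add: msum_map_index[OF fg ij] msum_map_index[OF f ij] msum_map_index[OF g ij] sum_list_subtractf e
          cong: map_cong)
  qed (use c in auto)
qed

lemma msum_smult:
  assumes f: "\<And>x. x \<in> set xs \<Longrightarrow> f x \<in> carrier_mat n n"
  shows "msum n (map (\<lambda>x. a \<cdot>\<^sub>m f x) xs) = a \<cdot>\<^sub>m msum n (map f xs)"
proof -
  have fg: "\<And>x. x \<in> set xs \<Longrightarrow> a \<cdot>\<^sub>m f x \<in> carrier_mat n n" using f by auto
  have c: "msum n (map f xs) \<in> carrier_mat n n" "msum n (map (\<lambda>x. a \<cdot>\<^sub>m f x) xs) \<in> carrier_mat n n"
    using f fg by auto
  show ?thesis
  proof (rule eq_matI)
    fix i j assume "i < dim_row (a \<cdot>\<^sub>m msum n (map f xs))" "j < dim_col (a \<cdot>\<^sub>m msum n (map f xs))"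
    then have ij: "i < n" "j < n" using c by auto
    have e: "(a \<cdot>\<^sub>m f x) $$ (i,j) = a * f x $$ (i,j)" if "x \<in> set xs" for x
      using f[OF that] ij by auto
    show "msum n (map (\<lambda>x. a \<cdot>\<^sub>m f x) xs) $$ (i, j) = (a \<cdot>\<^sub>m msum n (map f xs)) $$ (i, j)"
      using c ij by (simp add: msum_map_index[OF fg ij] msum_map_index[OF f ij] sum_list_const_mult e
          cong: map_cong)
  qed (use carrier_matD[OF c(1)] carrier_matD[OF c(2)] in auto)
qed

lemma mtrace_msum[simp]:
  assumes "\<forall>x\<in>set xs. f x \<in> carrier_mat n n"
  shows "mtrace (msum n (map f xs)) = sum_list (map (\<lambda>x. mtrace (f x)) xs)"
  using assms
proof (induct xs)
  case Nil then show ?case by simp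
next
  case (Cons x xs)
  have c: "msum n (map f xs) \<in> carrier_mat n n" "f x \<in> carrier_mat n n" using Cons by (auto intro!: msum_map_carrier)
  have ih: "mtrace (msum n (map f xs)) = sum_list (map (\<lambda>x. mtrace (f x)) xs)" using Cons by auto
  show ?case using c ih by (simp add: mtrace_add)
qed

lemma msum_cong: "(\<And>x. x \<in> set xs \<Longrightarrow> f x = g x) \<Longrightarrow> msum n (map f xs) = msum n (map g xs)"
  by (metis map_eq_conv)

section \<open>Kraus maps and their duals\<close>

definition kraus_dual :: "nat \<Rightarrow> cmat list \<Rightarrow> cmat \<Rightarrow> cmat" where
  "kraus_dual n Ks X = msum n (map (\<lambda>K. mat_adjoint K * X * K) Ks)"

lemma kraus_map_carrier[simp]: "\<forall>K\<in>set Ks. K \<in> carrier_mat n n \<Longrightarrow> \<rho> \<in> carrier_mat n n \<Longrightarrow>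
   kraus_map n Ks \<rho> \<in> carrier_mat n n"
  unfolding kraus_map_def by (rule msum_map_carrier) auto

lemma kraus_dual_carrier[simp]: "\<forall>K\<in>set Ks. K \<in> carrier_mat n n \<Longrightarrow> X \<in> carrier_mat n n \<Longrightarrow>
   kraus_dual n Ks X \<in> carrier_mat n n"
  unfolding kraus_dual_def by (rule msum_map_carrier) auto

lemma mtrace_kraus_map_mult:
  assumes kc: "\<forall>K\<in>set Ks. K \<in> carrier_mat n n" and r: "\<rho> \<in> carrier_mat n n" and x: "X \<in> carrier_mat n n"
  shows "mtrace (kraus_map n Ks \<rho> * X) = mtrace (\<rho> * kraus_dual n Ks X)"
proof -
  have "kraus_map n Ks \<rho> * X = msum n (map (\<lambda>K. K * \<rho> * mat_adjoint K * X) Ks)"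
    unfolding kraus_map_def by (rule msum_mult_right[OF x]) (use kc r in auto)
  then have "mtrace (kraus_map n Ks \<rho> * X) = (\<Sum>K\<leftarrow>Ks. mtrace (K * \<rho> * mat_adjoint K * X))"
    by (simp add: mtrace_msum kc r x)
  also have "\<dots> = (\<Sum>K\<leftarrow>Ks. mtrace (\<rho> * (mat_adjoint K * X * K)))"
  proof (rule arg_cong[where f=sum_list], rule map_cong[OF refl])
    fix K assume "K \<in> set Ks"
    then have k: "K \<in> carrier_mat n n" using kc by auto
    have "mtrace (K * \<rho> * mat_adjoint K * X) = mtrace (K * (\<rho> * mat_adjoint K * X))"
      using k r x by (simp add: assoc_mult_mat[of _ n n _ n _ n])
    also have "\<dots> = mtrace ((\<rho> * mat_adjoint K * X) * K)"
      by (rule mtrace_mult_comm[of _ n n]) (use k r x in auto)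
    also have "\<dots> = mtrace (\<rho> * (mat_adjoint K * X * K))"
      using k r x by (simp add: assoc_mult_mat[of _ n n _ n _ n])
    finally show "mtrace (K * \<rho> * mat_adjoint K * X) = mtrace (\<rho> * (mat_adjoint K * X * K))" .
  qed
  also have "\<dots> = mtrace (\<rho> * kraus_dual n Ks X)"
  proof -
    have "\<rho> * kraus_dual n Ks X = msum n (map (\<lambda>K. \<rho> * (mat_adjoint K * X * K)) Ks)"
      unfolding kraus_dual_def by (rule msum_mult_left[OF r]) (use kc x in auto)
    then show ?thesis by (simp add: mtrace_msum kc r x)
  qed
  finally show ?thesis .
qed

definition mat_unit :: "nat \<Rightarrow> nat \<Rightarrow> nat \<Rightarrow> cmat" where
  "mat_unit n a b = mat n n (\<lambda>(r,s). if r = a \<and> s = b then 1 else 0)"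

lemma mat_unit_carrier[simp]: "mat_unit n a b \<in> carrier_mat n n"
  unfolding mat_unit_def by simp

lemma mtrace_mat_unit_mult:
  assumes y: "Y \<in> carrier_mat n n" and ij: "i < n" "j < n"
  shows "mtrace (mat_unit n j i * Y) = Y $$ (i,j)"
proof -
  have e: "(mat_unit n j i * Y) $$ (r,r) = (if r = j then Y $$ (i,r) else 0)" if r: "r < n" for r
  proof -
    have "(mat_unit n j i * Y) $$ (r,r) = (\<Sum>k<n. mat_unit n j i $$ (r,k) * Y $$ (k,r))"
      by (rule index_mult_sum'[OF mat_unit_carrier y r r])
    also have "\<dots> = (\<Sum>k<n. if k = i then (if r = j then Y $$ (i,r) else 0) else 0)"
      using r by (intro sum.cong refl) (auto simp: mat_unit_def)
    also have "\<dots> = (if r = j then Y $$ (i,r) else 0)" using ij by simp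
    finally show ?thesis .
  qed
  have "mtrace (mat_unit n j i * Y) = (\<Sum>r<n. (mat_unit n j i * Y) $$ (r,r))"
    unfolding mtrace_def by (simp add: mat_unit_def)
  also have "\<dots> = (\<Sum>r<n. if r = j then Y $$ (i, r) else 0)"
    by (rule sum.cong) (auto simp: e)
  also have "\<dots> = Y $$ (i,j)" using ij by simp
  finally show ?thesis .
qed

lemma eq_mat_if_mtrace_mult_eq:
  assumes "Y \<in> carrier_mat n n" "Y' \<in> carrier_mat n n"
  "\<forall>\<rho>\<in>carrier_mat n n. mtrace (\<rho> * Y) = mtrace (\<rho> * Y')"
  shows "Y = Y'"
proof (rule eq_matI)
  fix i j assume "i < dim_row Y'" "j < dim_col Y'"
  then have ij: "i < n" "j < n" using assms by auto
  show "Y $$ (i,j) = Y' $$ (i,j)"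
    using assms(3)[rule_format, OF mat_unit_carrier[of n j i]] mtrace_mat_unit_mult[OF assms(1) ij] mtrace_mat_unit_mult[OF assms(2) ij]
    by simp
qed (use assms in auto)

lemma dual_map_eqI:
  assumes y: "Y \<in> carrier_mat n n" and h: "\<forall>\<rho>\<in>carrier_mat n n. mtrace (\<rho> * Y) = mtrace (\<Phi> \<rho> * X)"
  shows "dual_map n \<Phi> X = Y"
  unfolding dual_map_def
proof (rule the_equality)
  show "Y \<in> carrier_mat n n \<and> (\<forall>\<rho>\<in>carrier_mat n n. mtrace (\<rho> * Y) = mtrace (\<Phi> \<rho> * X))" using y h by auto
next
  fix Y' assume "Y' \<in> carrier_mat n n \<and> (\<forall>\<rho>\<in>carrier_mat n n. mtrace (\<rho> * Y') = mtrace (\<Phi> \<rho> * X))"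
  then show "Y' = Y" using y h by (intro eq_mat_if_mtrace_mult_eq[of _ n]) auto
qed

lemma dual_map_kraus_comp:
  assumes kc: "\<forall>K\<in>set Ks. K \<in> carrier_mat n n" and ec: "\<forall>E\<in>set Es. E \<in> carrier_mat n n"
    and R: "\<forall>\<rho>\<in>carrier_mat n n. R \<rho> = kraus_map n Ks \<rho>" and x: "X \<in> carrier_mat n n"
  shows "dual_map n (R \<circ> kraus_map n Es) X = kraus_dual n Es (kraus_dual n Ks X)"
proof (rule dual_map_eqI)
  show "kraus_dual n Es (kraus_dual n Ks X) \<in> carrier_mat n n" using kc ec x by simp
  show "\<forall>\<rho>\<in>carrier_mat n n. mtrace (\<rho> * kraus_dual n Es (kraus_dual n Ks X)) = mtrace ((R \<circ> kraus_map n Es) \<rho> * X)"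
  proof
    fix \<rho> :: cmat assume r: "\<rho> \<in> carrier_mat n n"
    have e: "kraus_map n Es \<rho> \<in> carrier_mat n n" using ec r by simp
    have "mtrace ((R \<circ> kraus_map n Es) \<rho> * X) = mtrace (kraus_map n Ks (kraus_map n Es \<rho>) * X)"
      using R e by simp
    also have "\<dots> = mtrace (kraus_map n Es \<rho> * kraus_dual n Ks X)" by (rule mtrace_kraus_map_mult[OF kc e x])
    also have "\<dots> = mtrace (\<rho> * kraus_dual n Es (kraus_dual n Ks X))" by (rule mtrace_kraus_map_mult[OF ec r]) (use kc x in simp)
    finally show "mtrace (\<rho> * kraus_dual n Es (kraus_dual n Ks X)) = mtrace ((R \<circ> kraus_map n Es) \<rho> * X)" by simp
  qed
qed

section \<open>Spectral theorem for Hermitian matrices\<close>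

definition unitary :: "nat \<Rightarrow> cmat \<Rightarrow> bool" where
  "unitary n U \<longleftrightarrow> U \<in> carrier_mat n n \<and> mat_adjoint U * U = 1\<^sub>m n \<and> U * mat_adjoint U = 1\<^sub>m n"

lemma unitaryD:
  assumes "unitary n U"
  shows "U \<in> carrier_mat n n" "mat_adjoint U * U = 1\<^sub>m n" "U * mat_adjoint U = 1\<^sub>m n"
  using assms unfolding unitary_def by auto

lemma unitary_adjoint_mult_cancel:
  assumes "unitary n U" and "X \<in> carrier_mat n k"
  shows "mat_adjoint U * (U * X) = X"
proof -
  note U = unitaryD[OF assms(1)]
  have "mat_adjoint U * (U * X) = (mat_adjoint U * U) * X"
    using U(1) assms(2) by (simp add: assoc_mult_mat[of _ n n _ n _ k])
  then show ?thesis using U(2) assms(2) by simp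
qed

lemma unitary_mult_adjoint_cancel:
  assumes "unitary n U" and "X \<in> carrier_mat n k"
  shows "U * (mat_adjoint U * X) = X"
proof -
  note U = unitaryD[OF assms(1)]
  have "U * (mat_adjoint U * X) = (U * mat_adjoint U) * X"
    using U(1) assms(2) by (simp add: assoc_mult_mat[of _ n n _ n _ k])
  then show ?thesis using U(3) assms(2) by simp
qed

lemma unitary_mult:
  assumes U: "unitary n U" and V: "unitary n V"
  shows "unitary n (U * V)"
proof -
  note U' = unitaryD[OF U] and V' = unitaryD[OF V]
  note as = assoc_mult_mat[of _ n n _ n _ n]
  have "mat_adjoint (U * V) * (U * V) = mat_adjoint V * (mat_adjoint U * U) * V"
    using U'(1) V'(1) by (simp add: adjoint_mult[of _ n n] as)
  moreover have "U * V * mat_adjoint (U * V) = U * (V * mat_adjoint V) * mat_adjoint U"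
    using U'(1) V'(1) by (simp add: adjoint_mult[of _ n n] as)
  ultimately show ?thesis using U' V' unfolding unitary_def by simp
qed

lemma corthogonal_norm:
  assumes orth: "corthogonal ws" and i: "i < length ws"
  shows "\<exists>s>0. ws ! i \<bullet>c ws ! i = complex_of_real (s * s)"
proof -
  have "ws ! i \<bullet>c ws ! i \<noteq> 0" using corthogonalD[OF orth i i] by simp
  moreover have "ws ! i \<bullet>c ws ! i \<ge> 0" by blast
  ultimately have "Im (ws ! i \<bullet>c ws ! i) = 0" "Re (ws ! i \<bullet>c ws ! i) > 0"
    by (auto simp: less_eq_complex_def complex_eq_iff)
  then show ?thesis by (intro exI[of _ "sqrt (Re (ws ! i \<bullet>c ws ! i))"]) (auto simp: complex_eq_iff)
qed

lemma unitary_of_corthogonal: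
  assumes orth: "corthogonal ws" and ws: "set ws \<subseteq> carrier_vec n" and len: "length ws = n"
  shows "\<exists>W. unitary n W \<and> (\<forall>i<n. \<exists>c. c \<noteq> 0 \<and> col W i = c \<cdot>\<^sub>v ws ! i)"
proof -
  have wc: "ws ! i \<in> carrier_vec n" if "i < n" for i using ws len that by auto
  obtain s where spos: "\<And>i. i < n \<Longrightarrow> s i > 0"
    and ss: "\<And>i. i < n \<Longrightarrow> ws ! i \<bullet>c ws ! i = complex_of_real (s i * s i)"
    using corthogonal_norm[OF orth] len by metis
  define W where "W = mat n n (\<lambda>(k,i). ws ! i $ k / complex_of_real (s i))"
  have Wc: "W \<in> carrier_mat n n" unfolding W_def by simp
  have WW: "mat_adjoint W * W = 1\<^sub>m n"
  proof (rule eq_matI)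
    fix i j assume "i < dim_row (1\<^sub>m n :: cmat)" "j < dim_col (1\<^sub>m n :: cmat)"
    then have ij: "i < n" "j < n" by auto
    have "(mat_adjoint W * W) $$ (i,j) = (\<Sum>k<n. cnj (W $$ (k,i)) * W $$ (k,j))"
      by (subst index_mult_sum'[of _ n n _ n]) (use Wc ij in auto)
    also have "\<dots> = (\<Sum>k<n. ws ! j $ k * cnj (ws ! i $ k)) / complex_of_real (s i * s j)"
      using ij by (auto simp: W_def sum_divide_distrib intro!: sum.cong)
    also have "(\<Sum>k<n. ws ! j $ k * cnj (ws ! i $ k)) = ws ! j \<bullet>c ws ! i"
      using wc[OF ij(1)] by (simp add: scalar_prod_def atLeast0LessThan conjugate_complex_def)
    finally have e: "(mat_adjoint W * W) $$ (i,j) = ws ! j \<bullet>c ws ! i / complex_of_real (s i * s j)" .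
    show "(mat_adjoint W * W) $$ (i,j) = 1\<^sub>m n $$ (i,j)"
    proof (cases "i = j")
      case True
      then show ?thesis using e ss[OF ij(1)] spos[OF ij(1)] ij by simp
    next
      case False
      then have "ws ! j \<bullet>c ws ! i = 0" using corthogonalD[OF orth, of j i] len ij by auto
      then show ?thesis using e False ij by simp
    qed
  qed (use Wc in auto)
  have "W * mat_adjoint W = 1\<^sub>m n"
    by (rule mat_mult_left_right_inverse[OF _ Wc WW]) (use Wc in simp)
  then have "unitary n W" unfolding unitary_def using Wc WW by simp
  moreover have "\<exists>c. c \<noteq> 0 \<and> col W i = c \<cdot>\<^sub>v ws ! i" if i: "i < n" for i
  proof (intro exI conjI)
    show "1 / complex_of_real (s i) \<noteq> 0" using spos[OF i] by simp
    show "col W i = (1 / complex_of_real (s i)) \<cdot>\<^sub>v ws ! i"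
    proof (rule eq_vecI)
      show "dim_vec (col W i) = dim_vec ((1 / complex_of_real (s i)) \<cdot>\<^sub>v ws ! i)"
        using wc[OF i] Wc by simp
      fix k assume "k < dim_vec ((1 / complex_of_real (s i)) \<cdot>\<^sub>v ws ! i)"
      then have "k < n" using wc[OF i] by simp
      then show "col W i $ k = ((1 / complex_of_real (s i)) \<cdot>\<^sub>v ws ! i) $ k"
        using i carrier_vecD[OF wc[OF i]] by (simp add: W_def)
    qed
  qed
  ultimately show ?thesis by blast
qed

lemma unitary_with_first_col:
  assumes v: "v \<in> carrier_vec n" and v0: "v \<noteq> 0\<^sub>v n"
  shows "\<exists>W c. unitary n W \<and> c \<noteq> 0 \<and> col W 0 = c \<cdot>\<^sub>v v"
proof -
  interpret cof_vec_space n "TYPE(complex)" .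
  define b where "b = basis_completion v"
  from basis_completion[OF v v0, folded b_def]
  have dist_b: "distinct b" and indep: "\<not> lin_dep (set b)" and bc: "set b \<subseteq> carrier_vec n"
    and hdb: "hd b = v" and len_b: "length b = n" by auto
  have n: "n > 0" using v v0 by (intro gr0I) auto
  from hdb len_b n obtain vs where bv: "b = v # vs" by (cases b) auto
  define ws where "ws = gram_schmidt n b"
  from gram_schmidt_result[OF bc dist_b indep ws_def]
  have "corthogonal ws" "set ws \<subseteq> carrier_vec n" "length ws = n" using len_b by auto
  moreover have "ws ! 0 = v"
  proof -
    have "hd ws = v" unfolding ws_def bv by (rule gram_schmidt_hd[OF v])
    then show ?thesis using \<open>length ws = n\<close> n hd_conv_nth[of ws] by auto
  qed
  ultimately show ?thesis using unitary_of_corthogonal n by metis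
qed

lemma unitary_deflation:
  assumes A: "A \<in> carrier_mat (Suc m) (Suc m)"
  shows "\<exists>W e. unitary (Suc m) W \<and> col (mat_adjoint W * A * W) 0 = e \<cdot>\<^sub>v unit_vec (Suc m) 0"
proof -
  let ?n = "Suc m"
  from spectrum_non_empty[OF A] obtain e where "e \<in> spectrum A" by auto
  then obtain v where "eigenvector A v e" unfolding spectrum_def eigenvalue_def by auto
  then have v: "v \<in> carrier_vec ?n" and v0: "v \<noteq> 0\<^sub>v ?n" and Av: "A *\<^sub>v v = e \<cdot>\<^sub>v v"
    unfolding eigenvector_def using A by auto
  from unitary_with_first_col[OF v v0] obtain W c where W: "unitary ?n W" and cW: "col W 0 = c \<cdot>\<^sub>v v"
    by blast
  note W' = unitaryD[OF W]
  have cv: "col W 0 \<in> carrier_vec ?n" using W'(1) by (simp add: carrier_vecI)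
  have "col (mat_adjoint W * A * W) 0 = mat_adjoint W *\<^sub>v (A *\<^sub>v col W 0)"
    using A W'(1) cv by (simp add: col_mult2[of _ ?n ?n _ ?n] assoc_mult_mat_vec[of _ ?n ?n _ ?n])
  also have "A *\<^sub>v col W 0 = e \<cdot>\<^sub>v col W 0"
    unfolding cW using A v Av by (simp add: mult_mat_vec smult_smult_assoc mult.commute)
  also have "mat_adjoint W *\<^sub>v (e \<cdot>\<^sub>v col W 0) = e \<cdot>\<^sub>v col (mat_adjoint W * W) 0"
    using W'(1) cv by (simp add: mult_mat_vec[of _ ?n ?n] col_mult2[of _ ?n ?n _ ?n])
  finally show ?thesis using W W'(2) by auto
qed

lemma adjoint_four_block:
  assumes "(A::cmat) \<in> carrier_mat r1 c1" "B \<in> carrier_mat r1 c2" "C \<in> carrier_mat r2 c1" "D \<in> carrier_mat r2 c2"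
  shows "mat_adjoint (four_block_mat A B C D) = four_block_mat (mat_adjoint A) (mat_adjoint C) (mat_adjoint B) (mat_adjoint D)"
  by (rule eq_matI) (use assms in auto)

lemma unitary_one_block:
  assumes U: "unitary m U"
  shows "unitary (Suc m) (four_block_mat (1\<^sub>m 1) (0\<^sub>m 1 m) (0\<^sub>m m 1) U)"
proof -
  note U' = unitaryD[OF U]
  have "mat_adjoint (four_block_mat (1\<^sub>m 1) (0\<^sub>m 1 m) (0\<^sub>m m 1) U) =
      four_block_mat (1\<^sub>m 1) (0\<^sub>m 1 m) (0\<^sub>m m 1) (mat_adjoint U)"
    using U' by (subst adjoint_four_block) auto
  moreover have "four_block_mat (1\<^sub>m 1) (0\<^sub>m 1 m) (0\<^sub>m m 1) U \<in> carrier_mat (Suc m) (Suc m)"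
    using four_block_carrier_mat[OF one_carrier_mat[of 1] U'(1)] by simp
  ultimately show ?thesis unfolding unitary_def using U'
    by (simp add: mult_four_block_mat[of _ 1 1 _ m _ m _ _ 1 _ m _ _])
qed

lemma unitary_schur_step:
  assumes A: "A \<in> carrier_mat (Suc m) (Suc m)" and col0: "col A 0 = e \<cdot>\<^sub>v unit_vec (Suc m) 0"
    and IH: "\<And>A3. A3 \<in> carrier_mat m m \<Longrightarrow>
      \<exists>U T. unitary m U \<and> T \<in> carrier_mat m m \<and> upper_triangular T \<and> A3 = U * T * mat_adjoint U"
  shows "\<exists>U T. unitary (Suc m) U \<and> T \<in> carrier_mat (Suc m) (Suc m) \<and> upper_triangular T \<and>
    A = U * T * mat_adjoint U"
proof -
  obtain A1 A2 A0 A3 where sp: "split_block A 1 1 = (A1,A2,A0,A3)" by (cases "split_block A 1 1") auto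
  have "dim_row A = 1 + m" "dim_col A = 1 + m" using A by auto
  note blk = split_block[OF sp this]
  have A0: "A0 = 0\<^sub>m m 1"
  proof (rule eq_matI)
    fix i j assume "i < dim_row (0\<^sub>m m 1 :: cmat)" "j < dim_col (0\<^sub>m m 1 :: cmat)"
    then have "A0 $$ (i,j) = col A 0 $ Suc i" and "j = 0"
      using sp A unfolding split_block_def Let_def by auto
    then show "A0 $$ (i,j) = 0\<^sub>m m 1 $$ (i,j)" unfolding col0 using \<open>i < _\<close> by simp
  qed (use blk in auto)
  from blk have A1: "A1 \<in> carrier_mat 1 1" and A2: "A2 \<in> carrier_mat 1 m" and A3: "A3 \<in> carrier_mat m m"
    by auto
  from IH[OF A3] obtain U3 T3 where U3: "unitary m U3" and T3: "T3 \<in> carrier_mat m m"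
    and ut3: "upper_triangular T3" and A3e: "A3 = U3 * T3 * mat_adjoint U3" by blast
  note U3' = unitaryD[OF U3]
  define D where "D = four_block_mat (1\<^sub>m 1) (0\<^sub>m 1 m) (0\<^sub>m m 1) U3"
  define T where "T = four_block_mat A1 (A2 * U3) (0\<^sub>m m 1) T3"
  have Tc: "T \<in> carrier_mat (Suc m) (Suc m)" unfolding T_def using four_block_carrier_mat[OF A1 T3] by simp
  have utT: "upper_triangular T" unfolding T_def
    by (rule upper_triangular_four_block[OF A1 T3 _ ut3]) (use A1 in \<open>auto simp: upper_triangular_def\<close>)
  have "mat_adjoint D = four_block_mat (1\<^sub>m 1) (0\<^sub>m 1 m) (0\<^sub>m m 1) (mat_adjoint U3)"
    unfolding D_def using U3' by (subst adjoint_four_block) auto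
  then have "A = D * T * mat_adjoint D"
    unfolding D_def T_def using A1 A2 T3 U3' A0 A3e blk(5)
    by (simp add: mult_four_block_mat[of _ 1 1 _ m _ m _ _ 1 _ m _ _] assoc_mult_mat[of _ 1 m _ m _ m]
        assoc_mult_mat[of _ m m _ m _ m])
  then show ?thesis using unitary_one_block[OF U3, folded D_def] Tc utT by blast
qed

lemma unitary_schur:
  assumes "(A::cmat) \<in> carrier_mat n n"
  shows "\<exists>U T. unitary n U \<and> T \<in> carrier_mat n n \<and> upper_triangular T \<and> A = U * T * mat_adjoint U"
  using assms
proof (induct n arbitrary: A)
  case 0
  then show ?case unfolding unitary_def upper_triangular_def by (intro exI[of _ "1\<^sub>m 0"] exI[of _ A]) auto
next
  case (Suc m A)
  let ?n = "Suc m"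
  obtain W e where W: "unitary ?n W" and col0: "col (mat_adjoint W * A * W) 0 = e \<cdot>\<^sub>v unit_vec ?n 0"
    using unitary_deflation[OF Suc(2)] by blast
  note W' = unitaryD[OF W]
  have "mat_adjoint W * A * W \<in> carrier_mat ?n ?n" using W'(1) Suc(2) by simp
  from unitary_schur_step[OF this col0 Suc(1)] obtain D T where D: "unitary ?n D" and T: "T \<in> carrier_mat ?n ?n"
    and ut: "upper_triangular T" and DT: "mat_adjoint W * A * W = D * T * mat_adjoint D" by blast
  note D' = unitaryD[OF D]
  have "A = (W * mat_adjoint W) * A * (W * mat_adjoint W)" using Suc(2) W' by simp
  also have "\<dots> = W * (mat_adjoint W * A * W) * mat_adjoint W"
    using Suc(2) W'(1) by (simp add: assoc_mult_mat[of _ ?n ?n _ ?n _ ?n])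
  also have "\<dots> = (W * D) * T * mat_adjoint (W * D)"
    unfolding DT using W' D' T by (simp add: adjoint_mult[of _ ?n ?n] assoc_mult_mat[of _ ?n ?n _ ?n _ ?n])
  finally show ?case using unitary_mult[OF W D] T ut by blast
qed

definition real_diag_mat :: "nat \<Rightarrow> (nat \<Rightarrow> real) \<Rightarrow> cmat" where
  "real_diag_mat n d = mat n n (\<lambda>(i,j). if i = j then complex_of_real (d i) else 0)"

lemma real_diag_mat_carrier[simp]: "real_diag_mat n d \<in> carrier_mat n n"
  unfolding real_diag_mat_def by simp

lemma real_diag_mat_dims[simp]: "dim_row (real_diag_mat n d) = n" "dim_col (real_diag_mat n d) = n"
  unfolding real_diag_mat_def by auto

lemma adjoint_real_diag_mat[simp]: "mat_adjoint (real_diag_mat n d) = real_diag_mat n d"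
  by (rule eq_matI) (auto simp: real_diag_mat_def)

lemma real_diag_mat_cong: "(\<And>k. k < n \<Longrightarrow> f k = g k) \<Longrightarrow> real_diag_mat n f = real_diag_mat n g"
  unfolding real_diag_mat_def by (rule eq_matI) auto

lemma real_diag_mat_add: "real_diag_mat n f + real_diag_mat n g = real_diag_mat n (\<lambda>k. f k + g k)"
  by (rule eq_matI) (auto simp: real_diag_mat_def)

lemma real_diag_mat_one: "real_diag_mat n (\<lambda>k. 1) = 1\<^sub>m n"
  by (rule eq_matI) (auto simp: real_diag_mat_def)

lemma real_diag_mat_zero: "real_diag_mat n (\<lambda>k. 0) = 0\<^sub>m n n"
  by (rule eq_matI) (auto simp: real_diag_mat_def)

lemma index_mult_real_diag_mat:
  assumes "Y \<in> carrier_mat r n" "i < r" "j < n"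
  shows "(Y * real_diag_mat n d) $$ (i,j) = Y $$ (i,j) * complex_of_real (d j)"
proof -
  have "(Y * real_diag_mat n d) $$ (i,j) = (\<Sum>k<n. Y $$ (i,k) * real_diag_mat n d $$ (k,j))"
    by (rule index_mult_sum'[OF assms(1) real_diag_mat_carrier assms(2,3)])
  also have "\<dots> = (\<Sum>k<n. if k = j then Y $$ (i,j) * complex_of_real (d j) else 0)"
    using assms by (intro sum.cong refl) (auto simp: real_diag_mat_def)
  finally show ?thesis using assms by simp
qed

lemma index_real_diag_mat_mult:
  assumes "Y \<in> carrier_mat n c" "i < n" "j < c"
  shows "(real_diag_mat n d * Y) $$ (i,j) = complex_of_real (d i) * Y $$ (i,j)"
proof -
  have "(real_diag_mat n d * Y) $$ (i,j) = (\<Sum>k<n. real_diag_mat n d $$ (i,k) * Y $$ (k,j))"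
    by (rule index_mult_sum'[OF real_diag_mat_carrier assms(1) assms(2,3)])
  also have "\<dots> = (\<Sum>k<n. if k = i then complex_of_real (d i) * Y $$ (i,j) else 0)"
    using assms by (intro sum.cong refl) (auto simp: real_diag_mat_def)
  finally show ?thesis using assms by simp
qed

lemma real_diag_mat_mult: "real_diag_mat n d * real_diag_mat n e = real_diag_mat n (\<lambda>i. d i * e i)"
proof (rule eq_matI)
  fix i j assume "i < dim_row (real_diag_mat n (\<lambda>i. d i * e i))" "j < dim_col (real_diag_mat n (\<lambda>i. d i * e i))"
  then show "(real_diag_mat n d * real_diag_mat n e) $$ (i, j) = real_diag_mat n (\<lambda>i. d i * e i) $$ (i, j)"
    using index_mult_real_diag_mat[OF real_diag_mat_carrier, of i n j d e] by (auto simp: real_diag_mat_def)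
qed auto

lemma index_unitary_conj_real_diag:
  assumes V: "V \<in> carrier_mat N N" and i: "i < N" and j: "j < N"
  shows "(V * real_diag_mat N d * mat_adjoint V) $$ (i,j) = (\<Sum>k<N. V $$ (i,k) * complex_of_real (d k) * cnj (V $$ (j,k)))"
proof -
  have "(V * real_diag_mat N d * mat_adjoint V) $$ (i,j) = (\<Sum>k<N. (V * real_diag_mat N d) $$ (i,k) * mat_adjoint V $$ (k,j))"
    by (rule index_mult_sum'[of _ N N _ N]) (use V i j in auto)
  also have "\<dots> = (\<Sum>k<N. V $$ (i,k) * complex_of_real (d k) * cnj (V $$ (j,k)))"
  proof (intro sum.cong refl)
    fix k assume "k \<in> {..<N}"
    then have k: "k < N" by simp
    show "(V * real_diag_mat N d) $$ (i,k) * mat_adjoint V $$ (k,j) = V $$ (i,k) * complex_of_real (d k) * cnj (V $$ (j,k))"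
      using index_mult_real_diag_mat[OF V i k, of d] V j k by simp
  qed
  finally show ?thesis .
qed

lemma hermitian_upper_triangular_diag:
  assumes T: "T \<in> carrier_mat n n" and h: "mat_adjoint T = T" and ut: "upper_triangular T"
  shows "T = real_diag_mat n (\<lambda>i. Re (T $$ (i,i)))"
proof (rule eq_matI)
  fix i j assume "i < dim_row (real_diag_mat n (\<lambda>i. Re (T $$ (i,i))))" "j < dim_col (real_diag_mat n (\<lambda>i. Re (T $$ (i,i))))"
  then have ij: "i < n" "j < n" by auto
  have sym: "T $$ (i,j) = cnj (T $$ (j,i))"
    using arg_cong[OF h, of "\<lambda>M. M $$ (i,j)"] ij T by auto
  have "i \<noteq> j \<Longrightarrow> T $$ (i,j) = 0"
    using ut ij T sym by (cases i j rule: linorder_cases) (auto simp: upper_triangular_def)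
  moreover have "T $$ (i,i) = cnj (T $$ (i,i))" using arg_cong[OF h, of "\<lambda>M. M $$ (i,i)"] ij T by auto
  then have "Im (T $$ (i,i)) = 0" by (metis cnj.simps(2) neg_equal_zero)
  ultimately show "T $$ (i,j) = real_diag_mat n (\<lambda>i. Re (T $$ (i,i))) $$ (i,j)"
    using ij by (auto simp: real_diag_mat_def complex_eq_iff)
qed (use T in auto)

lemma unitary_conj_mult:
  assumes U: "unitary n U" and X: "X \<in> carrier_mat n n" and Y: "Y \<in> carrier_mat n n"
  shows "(U * X * mat_adjoint U) * (U * Y * mat_adjoint U) = U * (X * Y) * mat_adjoint U"
  using unitaryD(1)[OF U] X Y by (simp add: assoc_mult_mat[of _ n n _ n _ n] unitary_adjoint_mult_cancel[OF U, where k=n])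

lemma unitary_conj_cancel:
  assumes U: "unitary n U" and X: "X \<in> carrier_mat n n"
  shows "mat_adjoint U * (U * X * mat_adjoint U) * U = X"
  using unitaryD[OF U] X by (simp add: assoc_mult_mat[of _ n n _ n _ n] unitary_adjoint_mult_cancel[OF U, where k=n])

lemma unitary_conj_real_diag_mult:
  assumes "unitary n U"
  shows "(U * real_diag_mat n f * mat_adjoint U) * (U * real_diag_mat n g * mat_adjoint U) =
    U * real_diag_mat n (\<lambda>k. f k * g k) * mat_adjoint U"
  using unitary_conj_mult[OF assms] by (simp add: real_diag_mat_mult)

lemma adjoint_unitary_conj_real_diag:
  assumes "U \<in> carrier_mat n n"
  shows "mat_adjoint (U * real_diag_mat n f * mat_adjoint U) = U * real_diag_mat n f * mat_adjoint U"
  using assms by (simp add: adjoint_mult[of _ n n _ n] assoc_mult_mat[of _ n n _ n _ n])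

lemma hermitian_diagonalization:
  assumes A: "(A::cmat) \<in> carrier_mat n n" and h: "mat_adjoint A = A"
  shows "\<exists>U d. unitary n U \<and> A = U * real_diag_mat n d * mat_adjoint U"
proof -
  from unitary_schur[OF A] obtain U T where U: "unitary n U" and T: "T \<in> carrier_mat n n"
    and ut: "upper_triangular T" and AT: "A = U * T * mat_adjoint U" by blast
  note U' = unitaryD[OF U]
  have TA: "T = mat_adjoint U * A * U" unfolding AT using unitary_conj_cancel[OF U T] ..
  have "mat_adjoint T = T"
    unfolding TA using U'(1) A h by (simp add: adjoint_mult[of _ n n _ n] assoc_mult_mat[of _ n n _ n _ n])
  with hermitian_upper_triangular_diag[OF T _ ut] AT U show ?thesis by metis
qed

text \<open>Functional calculus: a matrix commuting with a diagonal matrix maps each eigenspace to itself,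
  hence commutes with every function of the diagonal.\<close>

lemma real_diag_mat_commute_fun:
  assumes Y: "Y \<in> carrier_mat n n" and comm: "Y * real_diag_mat n d = real_diag_mat n d * Y"
  shows "Y * real_diag_mat n (\<lambda>i. f (d i)) = real_diag_mat n (\<lambda>i. f (d i)) * Y"
proof (rule eq_matI)
  fix i j assume "i < dim_row (real_diag_mat n (\<lambda>i. f (d i)) * Y)" "j < dim_col (real_diag_mat n (\<lambda>i. f (d i)) * Y)"
  then have ij: "i < n" "j < n" using Y by auto
  have "Y $$ (i,j) * complex_of_real (d j) = complex_of_real (d i) * Y $$ (i,j)"
    using arg_cong[OF comm, of "\<lambda>M. M $$ (i,j)"] Y ij
    by (simp add: index_mult_real_diag_mat index_real_diag_mat_mult del: index_mult_mat(1))
  then have "Y $$ (i,j) = 0 \<or> d i = d j" by (auto simp: mult.commute)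
  then show "(Y * real_diag_mat n (\<lambda>i. f (d i))) $$ (i,j) = (real_diag_mat n (\<lambda>i. f (d i)) * Y) $$ (i,j)"
    using Y ij by (auto simp: index_mult_real_diag_mat index_real_diag_mat_mult mult.commute simp del: index_mult_mat(1))
qed (use Y in auto)

lemma commute_unitary_conj_real_diag_fun:
  assumes U: "unitary n U" and Y: "Y \<in> carrier_mat n n"
    and comm: "Y * (U * real_diag_mat n d * mat_adjoint U) = (U * real_diag_mat n d * mat_adjoint U) * Y"
  shows "Y * (U * real_diag_mat n (\<lambda>i. f (d i)) * mat_adjoint U) = (U * real_diag_mat n (\<lambda>i. f (d i)) * mat_adjoint U) * Y"
proof -
  note U' = unitaryD[OF U]
  define Y' where "Y' = mat_adjoint U * Y * U"
  have Y'c: "Y' \<in> carrier_mat n n" unfolding Y'_def using U' Y by simp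
  have YY: "Y = U * Y' * mat_adjoint U"
    unfolding Y'_def using U' Y by (simp add: assoc_mult_mat[of _ n n _ n _ n] unitary_mult_adjoint_cancel[OF U, where k=n])
  have conj_comm: "Y * (U * D * mat_adjoint U) = (U * D * mat_adjoint U) * Y \<longleftrightarrow> Y' * D = D * Y'"
    if D: "D \<in> carrier_mat n n" for D
  proof
    assume "Y * (U * D * mat_adjoint U) = (U * D * mat_adjoint U) * Y"
    then have "U * (Y' * D) * mat_adjoint U = U * (D * Y') * mat_adjoint U"
      unfolding YY by (simp add: unitary_conj_mult[OF U Y'c D] unitary_conj_mult[OF U D Y'c])
    then have "mat_adjoint U * (U * (Y' * D) * mat_adjoint U) * U = mat_adjoint U * (U * (D * Y') * mat_adjoint U) * U"
      by simp
    then show "Y' * D = D * Y'"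
      using unitary_conj_cancel[OF U, of "Y' * D"] unitary_conj_cancel[OF U, of "D * Y'"] Y'c D by simp
  qed (simp add: YY unitary_conj_mult[OF U Y'c D] unitary_conj_mult[OF U D Y'c])
  show ?thesis
    using conj_comm real_diag_mat_commute_fun[OF Y'c] comm by simp
qed
section \<open>Block matrices\<close>

lemma sum_split_add: "(\<Sum>k<a+b. f k) = (\<Sum>k<a. f k) + (\<Sum>i<b. f (a+i))" for a b :: nat
  by (induct b) (auto simp: add.assoc)

lemma sum_lessThan_mult_blocks: "(\<Sum>p<m*n. f p) = (\<Sum>a<m. \<Sum>i<n. f (a*n+i))" for m n :: nat
proof (induct m)
  case 0 then show ?case by simp
next
  case (Suc m)
  have "(\<Sum>p<Suc m * n. f p) = (\<Sum>p<m*n + n. f p)" by (simp add: add.commute)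
  also have "\<dots> = (\<Sum>p<m*n. f p) + (\<Sum>i<n. f (m*n+i))" by (rule sum_split_add)
  finally show ?case using Suc by simp
qed

lemma block_div_mod[simp]: "i < n \<Longrightarrow> (a*n+i) div n = a" "i < n \<Longrightarrow> (a*n+i) mod n = i" for a i n :: nat
  by auto

lemma block_index_less: "a < m \<Longrightarrow> i < n \<Longrightarrow> a*n+i < m*n" for a i m n :: nat
proof -
  assume "a < m" "i < n"
  then have "a*n+i < a*n+n" by simp
  also have "\<dots> = (a+1)*n" by simp
  also have "\<dots> \<le> m*n" using \<open>a < m\<close> by (intro mult_right_mono) auto
  finally show ?thesis .
qed

lemma block_div_less: "p < m*n \<Longrightarrow> p div n < m" for p m n :: nat
  by (simp add: less_mult_imp_div_less)

lemma block_mod_less: "p < m*n \<Longrightarrow> p mod n < n" for p m n :: nat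
  by (cases "n = 0") auto

lemma block_decomp: "p = (p div n) * n + p mod n" for p n :: nat by simp

text \<open>Indices of C^m \<otimes> C^n are encoded as a * n + i with a < m and i < n.\<close>

definition id_tensor :: "nat \<Rightarrow> nat \<Rightarrow> cmat \<Rightarrow> cmat" where
  "id_tensor k n X = mat (k*n) (k*n) (\<lambda>(p,q). if p div n = q div n then X $$ (p mod n, q mod n) else 0)"

lemma id_tensor_carrier[simp]: "id_tensor k n X \<in> carrier_mat (k*n) (k*n)" unfolding id_tensor_def by simp
lemma id_tensor_dims[simp]: "dim_row (id_tensor k n X) = k*n" "dim_col (id_tensor k n X) = k*n"
  unfolding id_tensor_def by auto
lemma index_id_tensor: "p < k*n \<Longrightarrow> q < k*n \<Longrightarrow> id_tensor k n X $$ (p,q) = (if p div n = q div n then X $$ (p mod n, q mod n) else 0)"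
  unfolding id_tensor_def by simp

lemma id_tensor_one: "id_tensor k n (1\<^sub>m n) = 1\<^sub>m (k*n)"
proof (rule eq_matI)
  fix p q assume pq: "p < dim_row (1\<^sub>m (k*n) :: cmat)" "q < dim_col (1\<^sub>m (k*n) :: cmat)"
  then have "p mod n < n" "q mod n < n" by (auto simp: block_mod_less)
  moreover have "p = q \<longleftrightarrow> p div n = q div n \<and> p mod n = q mod n" by (metis block_decomp)
  ultimately show "id_tensor k n (1\<^sub>m n) $$ (p, q) = 1\<^sub>m (k * n) $$ (p, q)" using pq by (auto simp: index_id_tensor)
qed auto

lemma index_id_tensor_mult:
  assumes W: "W \<in> carrier_mat (k*n) c" and X: "X \<in> carrier_mat n n" and p: "p < k*n" and q: "q < c"
  shows "(id_tensor k n X * W) $$ (p,q) = (\<Sum>l<n. X $$ (p mod n, l) * W $$ ((p div n)*n + l, q))"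
proof -
  have a: "p div n < k" using p by (rule block_div_less)
  have "(id_tensor k n X * W) $$ (p,q) = (\<Sum>p'<k*n. id_tensor k n X $$ (p,p') * W $$ (p',q))"
    by (rule index_mult_sum'[OF id_tensor_carrier W p q])
  also have "\<dots> = (\<Sum>b<k. \<Sum>l<n. id_tensor k n X $$ (p,b*n+l) * W $$ (b*n+l,q))" by (rule sum_lessThan_mult_blocks)
  also have "\<dots> = (\<Sum>b<k. if b = p div n then (\<Sum>l<n. X $$ (p mod n, l) * W $$ ((p div n)*n + l, q)) else 0)"
    by (intro sum.cong refl) (auto simp: index_id_tensor p block_index_less)
  also have "\<dots> = (\<Sum>l<n. X $$ (p mod n, l) * W $$ ((p div n)*n + l, q))"
    using a by simp
  finally show ?thesis .
qed

lemma index_mult_id_tensor: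
  assumes W: "W \<in> carrier_mat r (k*n)" and X: "X \<in> carrier_mat n n" and p: "p < r" and q: "q < k*n"
  shows "(W * id_tensor k n X) $$ (p,q) = (\<Sum>l<n. W $$ (p, (q div n)*n + l) * X $$ (l, q mod n))"
proof -
  have a: "q div n < k" using q by (rule block_div_less)
  have "(W * id_tensor k n X) $$ (p,q) = (\<Sum>p'<k*n. W $$ (p,p') * id_tensor k n X $$ (p',q))"
    by (rule index_mult_sum'[OF W id_tensor_carrier p q])
  also have "\<dots> = (\<Sum>b<k. \<Sum>l<n. W $$ (p,b*n+l) * id_tensor k n X $$ (b*n+l,q))" by (rule sum_lessThan_mult_blocks)
  also have "\<dots> = (\<Sum>b<k. if b = q div n then (\<Sum>l<n. W $$ (p, (q div n)*n + l) * X $$ (l, q mod n)) else 0)"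
    by (intro sum.cong refl) (auto simp: index_id_tensor q block_index_less)
  also have "\<dots> = (\<Sum>l<n. W $$ (p, (q div n)*n + l) * X $$ (l, q mod n))"
    using a by simp
  finally show ?thesis .
qed

definition partial_trace :: "nat \<Rightarrow> nat \<Rightarrow> cmat \<Rightarrow> cmat" where
  "partial_trace m n W = mat n n (\<lambda>(i,j). \<Sum>b<m. W $$ (b*n+i, b*n+j))"

lemma partial_trace_carrier[simp]: "partial_trace m n W \<in> carrier_mat n n" unfolding partial_trace_def by simp
lemma partial_trace_dims[simp]: "dim_row (partial_trace m n W) = n" "dim_col (partial_trace m n W) = n"
  unfolding partial_trace_def by auto
lemma partial_trace_id_tensor_mult:
  assumes W: "W \<in> carrier_mat (m*n) (m*n)" and X: "X \<in> carrier_mat n n"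
  shows "partial_trace m n (id_tensor m n X * W) = X * partial_trace m n W"
proof (rule eq_matI)
  fix i j assume "i < dim_row (X * partial_trace m n W)" "j < dim_col (X * partial_trace m n W)"
  then have i: "i < n" and j: "j < n" using X by auto
  have "partial_trace m n (id_tensor m n X * W) $$ (i,j) = (\<Sum>b<m. (id_tensor m n X * W) $$ (b*n+i, b*n+j))"
    unfolding partial_trace_def using i j by simp
  also have "\<dots> = (\<Sum>b<m. \<Sum>l<n. X $$ (i,l) * W $$ (b*n+l, b*n+j))"
    by (intro sum.cong refl, subst index_id_tensor_mult[OF W X]) (use i j block_index_less in auto)
  also have "\<dots> = (\<Sum>l<n. X $$ (i,l) * (\<Sum>b<m. W $$ (b*n+l, b*n+j)))"
    by (subst sum.swap) (simp add: sum_distrib_left)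
  also have "\<dots> = (\<Sum>l<n. X $$ (i,l) * partial_trace m n W $$ (l,j))"
    using j by (intro sum.cong refl) (simp add: partial_trace_def)
  also have "\<dots> = (X * partial_trace m n W) $$ (i,j)"
    by (rule index_mult_sum'[OF X partial_trace_carrier i j, symmetric])
  finally show "partial_trace m n (id_tensor m n X * W) $$ (i,j) = (X * partial_trace m n W) $$ (i,j)" .
qed (use X in auto)

definition hconcat :: "nat \<Rightarrow> cmat list \<Rightarrow> cmat" where
  "hconcat n Fs = mat n (length Fs * n) (\<lambda>(r,p). Fs ! (p div n) $$ (r, p mod n))"

definition hblock :: "nat \<Rightarrow> cmat \<Rightarrow> nat \<Rightarrow> cmat" where
  "hblock n W a = mat n n (\<lambda>(r,i). W $$ (r, a*n+i))"

lemma hconcat_carrier[simp]: "hconcat n Fs \<in> carrier_mat n (length Fs * n)"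
  unfolding hconcat_def by simp

lemma hblock_carrier[simp]: "hblock n W a \<in> carrier_mat n n"
  unfolding hblock_def by simp

lemma index_adjoint_hconcat_sandwich:
  assumes Fs: "\<forall>F\<in>set Fs. F \<in> carrier_mat n n" and Y: "Y \<in> carrier_mat n n"
    and a: "a < length Fs" and b: "b < length Fs" and i: "i < n" and j: "j < n"
  shows "(mat_adjoint (hconcat n Fs) * Y * hconcat n Fs) $$ (a*n+i, b*n+j) = (mat_adjoint (Fs!a) * Y * Fs!b) $$ (i,j)"
proof -
  let ?S = "hconcat n Fs" and ?N = "length Fs * n"
  have Fa: "Fs ! a \<in> carrier_mat n n" and Fb: "Fs ! b \<in> carrier_mat n n" using Fs a b by auto
  have p: "a*n+i < ?N" and q: "b*n+j < ?N" using a b i j by (auto intro: block_index_less)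
  have SY: "mat_adjoint ?S * Y \<in> carrier_mat ?N n" using Y by (intro mult_carrier_mat) auto
  have row: "(mat_adjoint ?S * Y) $$ (a*n+i, s) = (mat_adjoint (Fs!a) * Y) $$ (i,s)" if s: "s < n" for s
  proof -
    have "(mat_adjoint ?S * Y) $$ (a*n+i, s) = (\<Sum>r<n. mat_adjoint ?S $$ (a*n+i, r) * Y $$ (r,s))"
      by (rule index_mult_sum'[OF adjoint_carrier[OF hconcat_carrier] Y p s])
    also have "\<dots> = (\<Sum>r<n. mat_adjoint (Fs!a) $$ (i, r) * Y $$ (r,s))"
      using Fa i p a by (intro sum.cong refl) (simp add: hconcat_def)
    also have "\<dots> = (mat_adjoint (Fs!a) * Y) $$ (i,s)"
      by (rule index_mult_sum'[OF adjoint_carrier[OF Fa] Y i s, symmetric])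
    finally show ?thesis .
  qed
  have "(mat_adjoint ?S * Y * ?S) $$ (a*n+i, b*n+j) = (\<Sum>s<n. (mat_adjoint ?S * Y) $$ (a*n+i,s) * ?S $$ (s,b*n+j))"
    by (rule index_mult_sum'[OF SY hconcat_carrier p q])
  also have "\<dots> = (\<Sum>s<n. (mat_adjoint (Fs!a) * Y) $$ (i,s) * Fs!b $$ (s,j))"
    using row q j by (intro sum.cong refl) (auto simp: hconcat_def)
  also have "\<dots> = (mat_adjoint (Fs!a) * Y * Fs!b) $$ (i,j)"
    by (rule index_mult_sum'[OF mult_carrier_mat[OF adjoint_carrier[OF Fa] Y] Fb i j, symmetric])
  finally show ?thesis .
qed

lemma kraus_dual_eq_partial_trace:
  assumes Fs: "\<forall>F\<in>set Fs. F \<in> carrier_mat n n" and Y: "Y \<in> carrier_mat n n"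
  shows "kraus_dual n Fs Y = partial_trace (length Fs) n (mat_adjoint (hconcat n Fs) * Y * hconcat n Fs)"
proof (rule eq_matI)
  fix i j assume "i < dim_row (partial_trace (length Fs) n (mat_adjoint (hconcat n Fs) * Y * hconcat n Fs))"
    "j < dim_col (partial_trace (length Fs) n (mat_adjoint (hconcat n Fs) * Y * hconcat n Fs))"
  then have ij: "i < n" "j < n" by auto
  have "kraus_dual n Fs Y $$ (i,j) = (\<Sum>F\<leftarrow>Fs. (mat_adjoint F * Y * F) $$ (i,j))"
    unfolding kraus_dual_def using Fs Y ij by (subst msum_map_index) auto
  also have "\<dots> = (\<Sum>b<length Fs. (mat_adjoint (Fs!b) * Y * Fs!b) $$ (i,j))"
    by (simp add: sum_list_sum_nth atLeast0LessThan)
  also have "\<dots> = partial_trace (length Fs) n (mat_adjoint (hconcat n Fs) * Y * hconcat n Fs) $$ (i,j)"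
    unfolding partial_trace_def using ij Fs Y by (auto simp: index_adjoint_hconcat_sandwich)
  finally show "kraus_dual n Fs Y $$ (i,j) = partial_trace (length Fs) n (mat_adjoint (hconcat n Fs) * Y * hconcat n Fs) $$ (i,j)" .
qed (use kraus_dual_carrier[OF Fs Y] in auto)

lemma mult_id_tensor_mult_adjoint:
  assumes W: "W \<in> carrier_mat n (m*n)" and Y: "Y \<in> carrier_mat n n"
  shows "W * id_tensor m n Y * mat_adjoint W = kraus_map n (map (hblock n W) [0..<m]) Y"
proof -
  let ?K = "map (hblock n W) [0..<m]"
  have Kc: "kraus_map n ?K Y \<in> carrier_mat n n" using Y by (intro kraus_map_carrier) auto
  have WY: "W * id_tensor m n Y \<in> carrier_mat n (m*n)" by (rule mult_carrier_mat[OF W id_tensor_carrier])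
  show ?thesis
  proof (rule eq_matI)
    fix r s assume "r < dim_row (kraus_map n ?K Y)" "s < dim_col (kraus_map n ?K Y)"
    then have r: "r < n" and s: "s < n" using Kc by auto
    have blk: "(W * id_tensor m n Y) $$ (r,a*n+j) = (hblock n W a * Y) $$ (r,j)" if a: "a < m" and j: "j < n" for a j
    proof -
      have "(W * id_tensor m n Y) $$ (r,a*n+j) = (\<Sum>l<n. hblock n W a $$ (r,l) * Y $$ (l,j))"
        using index_mult_id_tensor[OF W Y r block_index_less[OF a j]] a j r by (simp add: hblock_def)
      also have "\<dots> = (hblock n W a * Y) $$ (r,j)" by (rule index_mult_sum'[OF hblock_carrier Y r j, symmetric])
      finally show ?thesis .
    qed
    have "(W * id_tensor m n Y * mat_adjoint W) $$ (r,s) = (\<Sum>q<m*n. (W * id_tensor m n Y) $$ (r,q) * mat_adjoint W $$ (q,s))"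
      by (rule index_mult_sum'[OF WY adjoint_carrier[OF W] r s])
    also have "\<dots> = (\<Sum>a<m. \<Sum>j<n. (hblock n W a * Y) $$ (r,j) * mat_adjoint (hblock n W a) $$ (j,s))"
      unfolding sum_lessThan_mult_blocks using W s
      by (intro sum.cong refl) (auto simp: blk block_index_less hblock_def)
    also have "\<dots> = (\<Sum>a<m. (hblock n W a * Y * mat_adjoint (hblock n W a)) $$ (r,s))"
      using Y r s by (intro sum.cong refl) (simp add: index_mult_sum'[of _ n n _ n])
    also have "\<dots> = kraus_map n ?K Y $$ (r,s)"
      unfolding kraus_map_def using Y r s
      by (subst msum_map_index) (auto simp: sum_set_upt_conv_sum_list_nat[symmetric] atLeast0LessThan)
    finally show "(W * id_tensor m n Y * mat_adjoint W) $$ (r,s) = kraus_map n ?K Y $$ (r,s)" .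
  qed (use W Kc in auto)
qed
section \<open>Positive semidefinite matrices; Kraus maps are channels\<close>

lemma cscalar_mult_mat_vec_adjoint:
  assumes L: "(L::cmat) \<in> carrier_mat r c" and v: "v \<in> carrier_vec r" and w: "w \<in> carrier_vec c"
  shows "conjugate v \<bullet> (L *\<^sub>v w) = conjugate (mat_adjoint L *\<^sub>v v) \<bullet> w"
proof -
  have "conjugate v \<bullet> (L *\<^sub>v w) = (\<Sum>i<r. cnj (v $ i) * (\<Sum>j<c. L $$ (i,j) * w $ j))"
    using L v w by (simp add: scalar_prod_def atLeast0LessThan conjugate_complex_def)
  also have "\<dots> = (\<Sum>i<r. \<Sum>j<c. cnj (v $ i) * L $$ (i,j) * w $ j)"
    by (simp add: sum_distrib_left mult.assoc)
  also have "\<dots> = (\<Sum>j<c. \<Sum>i<r. cnj (v $ i) * L $$ (i,j) * w $ j)" by (rule sum.swap)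
  also have "\<dots> = (\<Sum>j<c. (\<Sum>i<r. cnj (v $ i) * L $$ (i,j)) * w $ j)"
    by (simp add: sum_distrib_right)
  also have "\<dots> = (\<Sum>j<c. cnj (\<Sum>i<r. cnj (L $$ (i,j)) * v $ i) * w $ j)"
    by (simp add: mult.commute)
  also have "\<dots> = conjugate (mat_adjoint L *\<^sub>v v) \<bullet> w"
    using L v w by (simp add: scalar_prod_def atLeast0LessThan conjugate_complex_def)
  finally show ?thesis .
qed

lemma psd_congruence:
  assumes M: "psd c M" and L: "L \<in> carrier_mat r c"
  shows "psd r (L * M * mat_adjoint L)"
proof -
  have Mc: "M \<in> carrier_mat c c" and Mh: "mat_adjoint M = M"
    and Mp: "\<forall>v\<in>carrier_vec c. 0 \<le> Re (conjugate v \<bullet> (M *\<^sub>v v))" using M unfolding psd_def by auto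
  have LM: "L * M \<in> carrier_mat r c" by (rule mult_carrier_mat[OF L Mc])
  have c: "L * M * mat_adjoint L \<in> carrier_mat r r" by (rule mult_carrier_mat[OF LM adjoint_carrier[OF L]])
  have h: "mat_adjoint (L * M * mat_adjoint L) = L * M * mat_adjoint L"
  proof -
    have "mat_adjoint (L * M * mat_adjoint L) = mat_adjoint (mat_adjoint L) * mat_adjoint (L * M)"
      by (rule adjoint_mult[of _ r c]) (use L Mc in auto)
    also have "mat_adjoint (L * M) = mat_adjoint M * mat_adjoint L" by (rule adjoint_mult[OF L Mc])
    finally show ?thesis using L Mc Mh by (simp add: assoc_mult_mat[of _ r c _ c _ r])
  qed
  have p: "0 \<le> Re (conjugate v \<bullet> ((L * M * mat_adjoint L) *\<^sub>v v))" if v: "v \<in> carrier_vec r" for v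
  proof -
    let ?w = "mat_adjoint L *\<^sub>v v"
    have w: "?w \<in> carrier_vec c" by (rule mult_mat_vec_carrier[OF adjoint_carrier[OF L] v])
    have "(L * M * mat_adjoint L) *\<^sub>v v = (L * M) *\<^sub>v ?w"
      by (rule assoc_mult_mat_vec[OF LM adjoint_carrier[OF L] v])
    also have "\<dots> = L *\<^sub>v (M *\<^sub>v ?w)"
      by (rule assoc_mult_mat_vec[OF L Mc w])
    finally have "(L * M * mat_adjoint L) *\<^sub>v v = L *\<^sub>v (M *\<^sub>v ?w)" .
    then have "conjugate v \<bullet> ((L * M * mat_adjoint L) *\<^sub>v v) = conjugate ?w \<bullet> (M *\<^sub>v ?w)"
      using cscalar_mult_mat_vec_adjoint[OF L v, of "M *\<^sub>v ?w"] Mc w by simp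
    then show ?thesis using Mp w by simp
  qed
  show ?thesis unfolding psd_def using c h p by auto
qed

lemma psd_add:
  assumes "psd n A" "psd n B"
  shows "psd n (A + B)"
proof -
  have Ac: "A \<in> carrier_mat n n" and Bc: "B \<in> carrier_mat n n" using assms unfolding psd_def by auto
  have h: "mat_adjoint (A + B) = A + B" using assms adjoint_add[OF Ac Bc] unfolding psd_def by simp
  have p: "0 \<le> Re (conjugate v \<bullet> ((A + B) *\<^sub>v v))" if v: "v \<in> carrier_vec n" for v
  proof -
    have "conjugate v \<bullet> ((A + B) *\<^sub>v v) = conjugate v \<bullet> (A *\<^sub>v v) + conjugate v \<bullet> (B *\<^sub>v v)"
      using Ac Bc v by (simp add: add_mult_distrib_mat_vec[of _ n n] scalar_prod_add_distrib[of _ n])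
    then show ?thesis using assms v unfolding psd_def by simp
  qed
  show ?thesis unfolding psd_def using Ac Bc h p by auto
qed

lemma psd_zero: "psd n (0\<^sub>m n n)"
  unfolding psd_def by (auto simp: scalar_prod_def)

lemma psd_msum:
  assumes "\<forall>x\<in>set xs. psd n (f x)"
  shows "psd n (msum n (map f xs))"
  using assms by (induct xs) (auto simp: psd_zero psd_add)

lemma adjoint_id_tensor:
  assumes "X \<in> carrier_mat n n"
  shows "mat_adjoint (id_tensor k n X) = id_tensor k n (mat_adjoint X)"
proof (rule eq_matI)
  fix p q assume pq: "p < dim_row (id_tensor k n (mat_adjoint X))" "q < dim_col (id_tensor k n (mat_adjoint X))"
  then have "p mod n < n" "q mod n < n" by (auto simp: block_mod_less)
  then show "mat_adjoint (id_tensor k n X) $$ (p, q) = id_tensor k n (mat_adjoint X) $$ (p, q)"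
    using pq assms by (auto simp: index_id_tensor)
qed auto

lemma index_id_tensor_sandwich:
  assumes K: "K \<in> carrier_mat n n" and M: "M \<in> carrier_mat (k*n) (k*n)" and p: "p < k*n" and q: "q < k*n"
  shows "(id_tensor k n K * M * mat_adjoint (id_tensor k n K)) $$ (p,q) =
    (K * mat n n (\<lambda>(r, s). M $$ (p div n * n + r, q div n * n + s)) * mat_adjoint K) $$ (p mod n, q mod n)"
proof -
  define blk where "blk = mat n n (\<lambda>(r, s). M $$ (p div n * n + r, q div n * n + s))"
  have blkc: "blk \<in> carrier_mat n n" unfolding blk_def by simp
  have pm: "p mod n < n" and qm: "q mod n < n" using p q by (auto simp: block_mod_less)
  have "(K * blk * mat_adjoint K) $$ (p mod n, q mod n) = (\<Sum>l<n. (K * blk) $$ (p mod n, l) * mat_adjoint K $$ (l, q mod n))"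
    by (rule index_mult_sum'[of _ n n _ n]) (use K blkc pm qm in auto)
  also have "\<dots> = (\<Sum>l<n. (id_tensor k n K * M) $$ (p, q div n * n + l) * mat_adjoint K $$ (l, q mod n))"
  proof (intro sum.cong refl)
    fix l assume l: "l \<in> {..<n}"
    have "q div n * n + l < k * n" using block_index_less[OF block_div_less[OF q], of l n] l by auto
    moreover have "(K * blk) $$ (p mod n, l) = (\<Sum>i<n. K $$ (p mod n, i) * blk $$ (i, l))"
      by (rule index_mult_sum'[of _ n n _ n]) (use K blkc pm l in auto)
    ultimately show "(K * blk) $$ (p mod n, l) * mat_adjoint K $$ (l, q mod n) =
        (id_tensor k n K * M) $$ (p, q div n * n + l) * mat_adjoint K $$ (l, q mod n)"
      using index_id_tensor_mult[OF M K p] l by (simp add: blk_def)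
  qed
  also have "\<dots> = (id_tensor k n K * M * id_tensor k n (mat_adjoint K)) $$ (p,q)"
    by (rule index_mult_id_tensor[symmetric]) (use M K p q in auto)
  finally show ?thesis using adjoint_id_tensor[OF K] unfolding blk_def by simp
qed

lemma ampl_kraus_map:
  assumes Kc: "\<forall>K\<in>set Ks. K \<in> carrier_mat n n" and M: "M \<in> carrier_mat (k*n) (k*n)"
  shows "ampl k n (kraus_map n Ks) M = msum (k*n) (map (\<lambda>K. id_tensor k n K * M * mat_adjoint (id_tensor k n K)) Ks)"
    (is "_ = msum (k*n) (map ?f Ks)")
proof (rule eq_matI)
  have c: "\<forall>K\<in>set Ks. ?f K \<in> carrier_mat (k*n) (k*n)" using M by auto
  then have cc: "msum (k*n) (map ?f Ks) \<in> carrier_mat (k*n) (k*n)" by simp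
  then show "dim_row (ampl k n (kraus_map n Ks) M) = dim_row (msum (k*n) (map ?f Ks))"
    "dim_col (ampl k n (kraus_map n Ks) M) = dim_col (msum (k*n) (map ?f Ks))"
    by (auto simp: ampl_def)
  fix p q assume "p < dim_row (msum (k*n) (map ?f Ks))" "q < dim_col (msum (k*n) (map ?f Ks))"
  then have p: "p < k*n" and q: "q < k*n" using cc by auto
  define blk where "blk = mat n n (\<lambda>(r, s). M $$ (p div n * n + r, q div n * n + s))"
  have pm: "p mod n < n" and qm: "q mod n < n" using p q by (auto simp: block_mod_less)
  have "ampl k n (kraus_map n Ks) M $$ (p,q) = kraus_map n Ks blk $$ (p mod n, q mod n)"
    using p q unfolding ampl_def blk_def by simp
  also have "\<dots> = (\<Sum>K\<leftarrow>Ks. (K * blk * mat_adjoint K) $$ (p mod n, q mod n))"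
    unfolding kraus_map_def by (rule msum_map_index) (use Kc pm qm in \<open>auto simp: blk_def\<close>)
  also have "\<dots> = (\<Sum>K\<leftarrow>Ks. ?f K $$ (p,q))"
    using index_id_tensor_sandwich[OF _ M p q] Kc unfolding blk_def
    by (intro arg_cong[where f=sum_list] map_cong) auto
  also have "\<dots> = msum (k*n) (map ?f Ks) $$ (p,q)"
    by (rule msum_map_index[symmetric]) (use c p q in auto)
  finally show "ampl k n (kraus_map n Ks) M $$ (p,q) = msum (k*n) (map ?f Ks) $$ (p,q)" .
qed

lemma completely_positive_kraus_map:
  assumes kc: "\<forall>K\<in>set Ks. K \<in> carrier_mat n n"
  shows "completely_positive n (kraus_map n Ks)"
  unfolding completely_positive_def
proof (intro allI impI)
  fix k M assume M: "psd (k*n) M"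
  then have Mc: "M \<in> carrier_mat (k*n) (k*n)" unfolding psd_def by auto
  show "psd (k*n) (ampl k n (kraus_map n Ks) M)"
    unfolding ampl_kraus_map[OF kc Mc]
    by (rule psd_msum) (auto intro: psd_congruence[OF M])
qed

lemma linear_map_kraus_map:
  assumes kc: "\<forall>K\<in>set Ks. K \<in> carrier_mat n n"
  shows "linear_map_mat n (kraus_map n Ks)"
  unfolding linear_map_mat_def
proof (intro conjI ballI allI)
  fix A :: cmat assume A: "A \<in> carrier_mat n n"
  show "kraus_map n Ks A \<in> carrier_mat n n" using kc A by simp
  fix c show "kraus_map n Ks (c \<cdot>\<^sub>m A) = c \<cdot>\<^sub>m kraus_map n Ks A"
  proof -
    have "kraus_map n Ks (c \<cdot>\<^sub>m A) = msum n (map (\<lambda>K. c \<cdot>\<^sub>m (K * A * mat_adjoint K)) Ks)"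
      unfolding kraus_map_def
      by (rule msum_cong) (use kc A in \<open>auto simp: mult_smult_distrib[of _ n n _ n] mult_smult_assoc_mat[of _ n n _ n]\<close>)
    also have "\<dots> = c \<cdot>\<^sub>m kraus_map n Ks A"
      unfolding kraus_map_def by (rule msum_smult) (use kc A in auto)
    finally show ?thesis .
  qed
next
  fix A B :: cmat assume A: "A \<in> carrier_mat n n" and B: "B \<in> carrier_mat n n"
  have "kraus_map n Ks (A + B) = msum n (map (\<lambda>K. K * A * mat_adjoint K + K * B * mat_adjoint K) Ks)"
    unfolding kraus_map_def
    by (rule msum_cong) (use kc A B in \<open>auto simp: mult_add_distrib_mat[of _ n n] add_mult_distrib_mat[of _ n n _ _ n]\<close>)
  also have "\<dots> = kraus_map n Ks A + kraus_map n Ks B"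
    unfolding kraus_map_def by (rule msum_add) (use kc A B in auto)
  finally show "kraus_map n Ks (A + B) = kraus_map n Ks A + kraus_map n Ks B" .
qed

lemma trace_preserving_kraus_map:
  assumes kc: "\<forall>K\<in>set Ks. K \<in> carrier_mat n n" and u: "kraus_dual n Ks (1\<^sub>m n) = 1\<^sub>m n"
  shows "trace_preserving n (kraus_map n Ks)"
  unfolding trace_preserving_def
proof
  fix A :: cmat assume A: "A \<in> carrier_mat n n"
  have kA: "kraus_map n Ks A \<in> carrier_mat n n" using kc A by simp
  have "mtrace (kraus_map n Ks A) = mtrace (kraus_map n Ks A * 1\<^sub>m n)" by (simp add: right_mult_one_mat[OF kA])
  also have "\<dots> = mtrace (A * kraus_dual n Ks (1\<^sub>m n))" by (rule mtrace_kraus_map_mult[OF kc A]) simp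
  also have "\<dots> = mtrace A" using u A by simp
  finally show "mtrace (kraus_map n Ks A) = mtrace A" .
qed

lemma channel_kraus_map:
  assumes kc: "\<forall>K\<in>set Ks. K \<in> carrier_mat n n" and u: "kraus_dual n Ks (1\<^sub>m n) = 1\<^sub>m n"
  shows "channel n (kraus_map n Ks)"
  unfolding channel_def using linear_map_kraus_map[OF kc] completely_positive_kraus_map[OF kc] trace_preserving_kraus_map[OF kc u] by auto


lemma psd_diag_nonneg:
  assumes M: "psd n M" and k: "k < n"
  shows "0 \<le> Re (M $$ (k,k))"
proof -
  have Mc: "M \<in> carrier_mat n n" using M unfolding psd_def by auto
  have "conjugate (unit_vec n k) = (unit_vec n k :: complex vec)" by (rule eq_vecI) (auto simp: unit_vec_def)
  then have "conjugate (unit_vec n k) \<bullet> (M *\<^sub>v unit_vec n k) = (M *\<^sub>v unit_vec n k) $ k"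
    using Mc k by simp
  also have "\<dots> = M $$ (k,k)" using Mc k by simp
  finally have "conjugate (unit_vec n k) \<bullet> (M *\<^sub>v unit_vec n k) = M $$ (k,k)" .
  then show ?thesis using M k unfolding psd_def by (metis unit_vec_carrier)
qed

lemma psd_unitary_diag_nonneg:
  assumes C: "psd n C" and V: "unitary n V" and Ce: "C = V * real_diag_mat n d * mat_adjoint V" and k: "k < n"
  shows "d k \<ge> 0"
proof -
  note V' = unitaryD[OF V]
  have "real_diag_mat n d = mat_adjoint V * C * mat_adjoint (mat_adjoint V)"
    unfolding Ce using unitary_conj_cancel[OF V real_diag_mat_carrier] by simp
  then have "psd n (real_diag_mat n d)" using psd_congruence[OF C adjoint_carrier[OF V'(1)]] by simp
  from psd_diag_nonneg[OF this k] show ?thesis using k by (simp add: real_diag_mat_def)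
qed
section \<open>Kraus representation of completely positive maps\<close>

lemma smult_zero_mat_sq: "A \<in> carrier_mat n n \<Longrightarrow> 0 \<cdot>\<^sub>m (A::cmat) = 0\<^sub>m n n"
  by (rule eq_matI) auto

lemma linear_map_zero:
  assumes "linear_map_mat n \<Phi>"
  shows "\<Phi> (0\<^sub>m n n) = 0\<^sub>m n n"
proof -
  have "\<Phi> (0\<^sub>m n n) = \<Phi> (0 \<cdot>\<^sub>m 0\<^sub>m n n)" using smult_zero_mat_sq[of "0\<^sub>m n n" n] by simp
  also have "\<dots> = 0 \<cdot>\<^sub>m \<Phi> (0\<^sub>m n n)" using assms unfolding linear_map_mat_def by (meson zero_carrier_mat)
  also have "\<dots> = 0\<^sub>m n n" using assms smult_zero_mat_sq unfolding linear_map_mat_def by auto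
  finally show ?thesis .
qed

lemma linear_map_msum:
  assumes l: "linear_map_mat n \<Phi>" and xs: "\<forall>x\<in>set xs. x \<in> carrier_mat n n"
  shows "\<Phi> (msum n xs) = msum n (map \<Phi> xs)"
  using xs
proof (induct xs)
  case Nil then show ?case using linear_map_zero[OF l] by simp
next
  case (Cons x xs)
  have "msum n xs \<in> carrier_mat n n" using Cons by (intro msum_carrier) auto
  then show ?case using Cons l unfolding linear_map_mat_def by auto
qed

lemma sum_list_product: "(\<Sum>p\<leftarrow>List.product xs ys. f p) = (\<Sum>x\<leftarrow>xs. \<Sum>y\<leftarrow>ys. f (x,y))"
  by (induct xs) (auto simp: comp_def)

lemma mat_unit_expansion:
  assumes r: "\<rho> \<in> carrier_mat n n"
  shows "\<rho> = msum n (map (\<lambda>(a,b). \<rho> $$ (a,b) \<cdot>\<^sub>m mat_unit n a b) (List.product [0..<n] [0..<n]))"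
proof (rule eq_matI)
  have c: "\<forall>x\<in>set (List.product [0..<n] [0..<n]). (case x of (a,b) \<Rightarrow> \<rho> $$ (a,b) \<cdot>\<^sub>m mat_unit n a b) \<in> carrier_mat n n"
    by auto
  fix i j assume ij: "i < dim_row (msum n (map (\<lambda>(a,b). \<rho> $$ (a,b) \<cdot>\<^sub>m mat_unit n a b) (List.product [0..<n] [0..<n])))"
    "j < dim_col (msum n (map (\<lambda>(a,b). \<rho> $$ (a,b) \<cdot>\<^sub>m mat_unit n a b) (List.product [0..<n] [0..<n])))"
  then have ij: "i < n" "j < n" using msum_map_carrier[OF c] by auto
  have "msum n (map (\<lambda>(a,b). \<rho> $$ (a,b) \<cdot>\<^sub>m mat_unit n a b) (List.product [0..<n] [0..<n])) $$ (i,j)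
     = (\<Sum>p\<leftarrow>List.product [0..<n] [0..<n]. (case p of (a,b) \<Rightarrow> \<rho> $$ (a,b) \<cdot>\<^sub>m mat_unit n a b) $$ (i,j))"
    by (rule msum_map_index) (use c ij in auto)
  also have "\<dots> = (\<Sum>a\<leftarrow>[0..<n]. \<Sum>b\<leftarrow>[0..<n]. (\<rho> $$ (a,b) \<cdot>\<^sub>m mat_unit n a b) $$ (i,j))"
    by (simp add: sum_list_product)
  also have "\<dots> = (\<Sum>a\<leftarrow>[0..<n]. \<Sum>b\<leftarrow>[0..<n]. if a = i \<and> b = j then \<rho> $$ (i,j) else 0)"
    using ij by (intro arg_cong[where f=sum_list] map_cong refl) (auto simp: mat_unit_def)
  also have "\<dots> = (\<Sum>a\<leftarrow>[0..<n]. if a = i then \<rho> $$ (i,j) else 0)"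
  proof (intro arg_cong[where f=sum_list] map_cong refl)
    fix a assume "a \<in> set [0..<n]"
    have "(\<Sum>b\<leftarrow>[0..<n]. if a = i \<and> b = j then \<rho> $$ (i,j) else 0) = (\<Sum>b\<in>{0..<n}. if a = i \<and> b = j then \<rho> $$ (i,j) else 0)"
      by (simp add: sum_set_upt_conv_sum_list_nat[symmetric])
    also have "\<dots> = (if a = i then \<rho> $$ (i,j) else 0)" using ij by (cases "a = i") auto
    finally show "(\<Sum>b\<leftarrow>[0..<n]. if a = i \<and> b = j then \<rho> $$ (i,j) else 0) = (if a = i then \<rho> $$ (i,j) else 0)" .
  qed
  also have "\<dots> = \<rho> $$ (i,j)"
    using ij by (simp add: sum_set_upt_conv_sum_list_nat[symmetric])
  finally show "\<rho> $$ (i,j) = msum n (map (\<lambda>(a,b). \<rho> $$ (a,b) \<cdot>\<^sub>m mat_unit n a b) (List.product [0..<n] [0..<n])) $$ (i,j)"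
    by simp
next
  have c: "\<forall>x\<in>set (List.product [0..<n] [0..<n]). (case x of (a,b) \<Rightarrow> \<rho> $$ (a,b) \<cdot>\<^sub>m mat_unit n a b) \<in> carrier_mat n n"
    by auto
  note mc = msum_map_carrier[OF c]
  show "dim_row \<rho> = dim_row (msum n (map (\<lambda>(a,b). \<rho> $$ (a,b) \<cdot>\<^sub>m mat_unit n a b) (List.product [0..<n] [0..<n])))"
    "dim_col \<rho> = dim_col (msum n (map (\<lambda>(a,b). \<rho> $$ (a,b) \<cdot>\<^sub>m mat_unit n a b) (List.product [0..<n] [0..<n])))"
    using carrier_matD[OF mc] r by auto
qed

lemma linear_map_eq_if_eq_on_mat_units:
  assumes l1: "linear_map_mat n \<Phi>" and l2: "linear_map_mat n \<Psi>"
    and e: "\<forall>a<n. \<forall>b<n. \<Phi> (mat_unit n a b) = \<Psi> (mat_unit n a b)"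
  shows "\<forall>\<rho>\<in>carrier_mat n n. \<Phi> \<rho> = \<Psi> \<rho>"
proof
  fix \<rho> :: cmat assume r: "\<rho> \<in> carrier_mat n n"
  let ?xs = "map (\<lambda>(a,b). \<rho> $$ (a,b) \<cdot>\<^sub>m mat_unit n a b) (List.product [0..<n] [0..<n])"
  have c: "\<forall>x\<in>set ?xs. x \<in> carrier_mat n n" by auto
  have "\<Phi> \<rho> = msum n (map \<Phi> ?xs)" using linear_map_msum[OF l1 c] mat_unit_expansion[OF r] by simp
  also have "map \<Phi> ?xs = map \<Psi> ?xs"
  proof (rule map_cong[OF refl])
    fix x assume "x \<in> set ?xs"
    then obtain a b where ab: "a < n" "b < n" and x: "x = \<rho> $$ (a,b) \<cdot>\<^sub>m mat_unit n a b" by auto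
    have "\<Phi> x = \<rho> $$ (a,b) \<cdot>\<^sub>m \<Phi> (mat_unit n a b)" unfolding x using l1 unfolding linear_map_mat_def by auto
    also have "\<dots> = \<rho> $$ (a,b) \<cdot>\<^sub>m \<Psi> (mat_unit n a b)" using e ab by simp
    also have "\<dots> = \<Psi> x" unfolding x using l2 unfolding linear_map_mat_def by auto
    finally show "\<Phi> x = \<Psi> x" .
  qed
  also have "msum n (map \<Psi> ?xs) = \<Psi> \<rho>" using linear_map_msum[OF l2 c] mat_unit_expansion[OF r] by simp
  finally show "\<Phi> \<rho> = \<Psi> \<rho>" .
qed

definition max_entangled :: "nat \<Rightarrow> cmat" where
  "max_entangled n = mat (n*n) (n*n) (\<lambda>(p,q). if p div n = p mod n \<and> q div n = q mod n then 1 else 0)"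

lemma psd_max_entangled: "psd (n*n) (max_entangled n)"
proof -
  let ?N = "n*n"
  have c: "max_entangled n \<in> carrier_mat ?N ?N" unfolding max_entangled_def by simp
  have h: "mat_adjoint (max_entangled n) = max_entangled n" by (rule eq_matI) (auto simp: max_entangled_def)
  have p: "0 \<le> Re (conjugate v \<bullet> (max_entangled n *\<^sub>v v))" if v: "v \<in> carrier_vec ?N" for v
  proof -
    define t where "t = (\<Sum>q<?N. if q div n = q mod n then v $ q else 0)"
    have ov: "(max_entangled n *\<^sub>v v) $ p = (if p div n = p mod n then t else 0)" if p: "p < ?N" for p
    proof -
      have "(max_entangled n *\<^sub>v v) $ p = (\<Sum>q<?N. max_entangled n $$ (p,q) * v $ q)"
        using p v c by (simp add: scalar_prod_def atLeast0LessThan)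
      also have "\<dots> = (\<Sum>q<?N. if p div n = p mod n then (if q div n = q mod n then v $ q else 0) else 0)"
        using p by (intro sum.cong refl) (auto simp: max_entangled_def)
      finally show ?thesis unfolding t_def by simp
    qed
    have "conjugate v \<bullet> (max_entangled n *\<^sub>v v) = (\<Sum>p<?N. cnj (v $ p) * (max_entangled n *\<^sub>v v) $ p)"
      using v c by (simp add: scalar_prod_def atLeast0LessThan conjugate_complex_def)
    also have "\<dots> = (\<Sum>p<?N. (if p div n = p mod n then cnj (v $ p) else 0) * t)"
      by (intro sum.cong refl) (auto simp: ov)
    also have "\<dots> = cnj t * t" unfolding t_def by (simp add: sum_distrib_right if_distrib cong: if_cong)
    finally show ?thesis by (simp add: complex_mult_cnj mult.commute)
  qed
  show ?thesis unfolding psd_def using c h p by auto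
qed

lemma index_mult_mat_unit_adjoint:
  assumes K: "(K::cmat) \<in> carrier_mat n n" and ab: "a < n" "b < n" and rs: "r < n" "s < n"
  shows "(K * mat_unit n a b * mat_adjoint K) $$ (r,s) = K $$ (r,a) * cnj (K $$ (s,b))"
proof -
  have e1: "(K * mat_unit n a b) $$ (r,l) = (if l = b then K $$ (r,a) else 0)" if l: "l < n" for l
  proof -
    have "(K * mat_unit n a b) $$ (r,l) = (\<Sum>i<n. K $$ (r,i) * mat_unit n a b $$ (i,l))"
      by (rule index_mult_sum'[OF K mat_unit_carrier rs(1) l])
    also have "\<dots> = (\<Sum>i<n. if i = a then (if l = b then K $$ (r,a) else 0) else 0)"
      using l by (intro sum.cong refl) (auto simp: mat_unit_def)
    finally show ?thesis using ab by simp
  qed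
  have "(K * mat_unit n a b * mat_adjoint K) $$ (r,s) = (\<Sum>l<n. (K * mat_unit n a b) $$ (r,l) * mat_adjoint K $$ (l,s))"
    by (rule index_mult_sum'[of _ n n _ n]) (use K rs in auto)
  also have "\<dots> = (\<Sum>l<n. if l = b then K $$ (r,a) * cnj (K $$ (s,b)) else 0)"
    using K rs by (intro sum.cong refl) (auto simp: e1)
  finally show ?thesis using ab by simp
qed

lemma index_ampl_max_entangled:
  assumes ab: "a < n" "b < n" and rs: "r < n" "s < n"
  shows "ampl n n R (max_entangled n) $$ (a*n+r, b*n+s) = R (mat_unit n a b) $$ (r,s)"
proof -
  have "mat n n (\<lambda>(r', s'). max_entangled n $$ ((a*n+r) div n * n + r', (b*n+s) div n * n + s')) = mat_unit n a b"
    by (rule eq_matI) (use rs ab block_index_less[OF ab(1)] block_index_less[OF ab(2)] in \<open>auto simp: max_entangled_def mat_unit_def\<close>)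
  then show ?thesis unfolding ampl_def using ab rs block_index_less by simp
qed

lemma index_kraus_map_mat_unit:
  assumes Kc: "\<forall>K\<in>set Ks. K \<in> carrier_mat n n" and ab: "a < n" "b < n" and rs: "r < n" "s < n"
  shows "kraus_map n Ks (mat_unit n a b) $$ (r,s) = (\<Sum>K\<leftarrow>Ks. K $$ (r,a) * cnj (K $$ (s,b)))"
  unfolding kraus_map_def using assms
  by (subst msum_map_index) (auto simp: index_mult_mat_unit_adjoint intro!: arg_cong[where f=sum_list])

text \<open>Choi's theorem: the Kraus operators are the eigenvectors of the Choi matrix, reshaped to
  n x n matrices and scaled by the square roots of the eigenvalues.\<close>

definition choi_kraus :: "nat \<Rightarrow> cmat \<Rightarrow> (nat \<Rightarrow> real) \<Rightarrow> nat \<Rightarrow> cmat" where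
  "choi_kraus n V d k = mat n n (\<lambda>(r,a). complex_of_real (sqrt (d k)) * V $$ (a*n + r, k))"

lemma index_unitary_conj_real_diag_choi_kraus:
  assumes V: "V \<in> carrier_mat (n*n) (n*n)" and d: "\<And>k. k < n*n \<Longrightarrow> d k \<ge> 0"
    and ab: "a < n" "b < n" and rs: "r < n" "s < n"
  shows "(V * real_diag_mat (n*n) d * mat_adjoint V) $$ (a*n+r, b*n+s) =
    (\<Sum>K\<leftarrow>map (choi_kraus n V d) [0..<n*n]. K $$ (r,a) * cnj (K $$ (s,b)))"
proof -
  have "(V * real_diag_mat (n*n) d * mat_adjoint V) $$ (a*n+r, b*n+s) =
      (\<Sum>k<n*n. V $$ (a*n+r,k) * complex_of_real (d k) * cnj (V $$ (b*n+s,k)))"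
    using V ab rs block_index_less by (intro index_unitary_conj_real_diag) auto
  also have "\<dots> = (\<Sum>k<n*n. choi_kraus n V d k $$ (r,a) * cnj (choi_kraus n V d k $$ (s,b)))"
  proof (intro sum.cong refl)
    fix k assume "k \<in> {..<n*n}"
    then have "complex_of_real (d k) = complex_of_real (sqrt (d k)) * cnj (complex_of_real (sqrt (d k)))"
      using d by (simp flip: of_real_mult)
    then show "V $$ (a*n+r,k) * complex_of_real (d k) * cnj (V $$ (b*n+s,k)) =
        choi_kraus n V d k $$ (r,a) * cnj (choi_kraus n V d k $$ (s,b))"
      using rs ab by (simp add: choi_kraus_def algebra_simps)
  qed
  also have "\<dots> = (\<Sum>K\<leftarrow>map (choi_kraus n V d) [0..<n*n]. K $$ (r,a) * cnj (K $$ (s,b)))"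
    by (simp add: sum_set_upt_conv_sum_list_nat[symmetric] atLeast0LessThan comp_def)
  finally show ?thesis .
qed

lemma kraus_representation:
  assumes lin: "linear_map_mat n R" and cp: "completely_positive n R"
  shows "\<exists>Ks. (\<forall>K\<in>set Ks. K \<in> carrier_mat n n) \<and> (\<forall>\<rho>\<in>carrier_mat n n. R \<rho> = kraus_map n Ks \<rho>)"
proof -
  let ?N = "n*n"
  define C where "C = ampl n n R (max_entangled n)"
  have Cp: "psd ?N C" unfolding C_def using cp psd_max_entangled unfolding completely_positive_def by auto
  then obtain V d where V: "unitary ?N V" and Ce: "C = V * real_diag_mat ?N d * mat_adjoint V"
    using hermitian_diagonalization unfolding psd_def by blast
  have d: "d k \<ge> 0" if "k < ?N" for k by (rule psd_unitary_diag_nonneg[OF Cp V Ce that])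
  define Ks where "Ks = map (choi_kraus n V d) [0..<?N]"
  have Kc: "\<forall>K\<in>set Ks. K \<in> carrier_mat n n" unfolding Ks_def choi_kraus_def by auto
  have "R (mat_unit n a b) = kraus_map n Ks (mat_unit n a b)" if ab: "a < n" "b < n" for a b
  proof -
    have Rc: "R (mat_unit n a b) \<in> carrier_mat n n" using lin unfolding linear_map_mat_def by auto
    have Kmc: "kraus_map n Ks (mat_unit n a b) \<in> carrier_mat n n" by (rule kraus_map_carrier[OF Kc mat_unit_carrier])
    show ?thesis
    proof (rule eq_matI)
      fix r s assume "r < dim_row (kraus_map n Ks (mat_unit n a b))" "s < dim_col (kraus_map n Ks (mat_unit n a b))"
      then have rs: "r < n" "s < n" using Kmc by auto
      have "R (mat_unit n a b) $$ (r,s) = C $$ (a*n+r, b*n+s)"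
        unfolding C_def using index_ampl_max_entangled[OF ab rs] ..
      also have "\<dots> = (\<Sum>K\<leftarrow>Ks. K $$ (r,a) * cnj (K $$ (s,b)))"
        unfolding Ce Ks_def by (rule index_unitary_conj_real_diag_choi_kraus[OF unitaryD(1)[OF V] d ab rs])
      also have "\<dots> = kraus_map n Ks (mat_unit n a b) $$ (r,s)"
        by (rule index_kraus_map_mat_unit[OF Kc ab rs, symmetric])
      finally show "R (mat_unit n a b) $$ (r,s) = kraus_map n Ks (mat_unit n a b) $$ (r,s)" .
    qed (use Rc Kmc in auto)
  qed
  then have "\<forall>\<rho>\<in>carrier_mat n n. R \<rho> = kraus_map n Ks \<rho>"
    by (intro linear_map_eq_if_eq_on_mat_units[OF lin linear_map_kraus_map[OF Kc]]) auto
  then show ?thesis using Kc by blast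
qed

lemma kraus_dual_one_if_trace_preserving:
  assumes kc: "\<forall>K\<in>set Ks. K \<in> carrier_mat n n" and R: "\<forall>\<rho>\<in>carrier_mat n n. R \<rho> = kraus_map n Ks \<rho>"
    and tp: "trace_preserving n R"
  shows "kraus_dual n Ks (1\<^sub>m n) = 1\<^sub>m n"
proof (rule eq_mat_if_mtrace_mult_eq[of _ n])
  show "kraus_dual n Ks (1\<^sub>m n) \<in> carrier_mat n n" using kc by simp
  show "1\<^sub>m n \<in> carrier_mat n n" by simp
  show "\<forall>\<rho>\<in>carrier_mat n n. mtrace (\<rho> * kraus_dual n Ks (1\<^sub>m n)) = mtrace (\<rho> * 1\<^sub>m n)"
  proof
    fix \<rho> :: cmat assume r: "\<rho> \<in> carrier_mat n n"
    have kr: "kraus_map n Ks \<rho> \<in> carrier_mat n n" using kc r by simp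
    have "mtrace (\<rho> * kraus_dual n Ks (1\<^sub>m n)) = mtrace (kraus_map n Ks \<rho> * 1\<^sub>m n)"
      by (rule mtrace_kraus_map_mult[OF kc r, symmetric]) simp
    also have "\<dots> = mtrace (R \<rho>)" using R r kr by (simp add: right_mult_one_mat[OF kr])
    also have "\<dots> = mtrace \<rho>" using tp r unfolding trace_preserving_def by auto
    finally show "mtrace (\<rho> * kraus_dual n Ks (1\<^sub>m n)) = mtrace (\<rho> * 1\<^sub>m n)" using r by (simp add: right_mult_one_mat[OF r])
  qed
qed

section \<open>Necessity of the commutation condition\<close>

lemma kraus_dual_sandwich:
  assumes Kc: "\<forall>K\<in>set Ks. K \<in> carrier_mat n n" and L: "L \<in> carrier_mat n n" and R: "R \<in> carrier_mat n n"
    and Y: "Y \<in> carrier_mat n n"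
  shows "msum n (map (\<lambda>K. L * (mat_adjoint K * Y * K) * R) Ks) = L * kraus_dual n Ks Y * R"
proof -
  have "L * kraus_dual n Ks Y = msum n (map (\<lambda>K. L * (mat_adjoint K * Y * K)) Ks)"
    unfolding kraus_dual_def by (rule msum_mult_left[OF L]) (use Kc Y in auto)
  moreover have "msum n (map (\<lambda>K. L * (mat_adjoint K * Y * K)) Ks) * R = msum n (map (\<lambda>K. L * (mat_adjoint K * Y * K) * R) Ks)"
    by (rule msum_mult_right[OF R]) (use Kc Y L in auto)
  ultimately show ?thesis by simp
qed

lemma kraus_dual_mult_right:
  assumes Kc: "\<forall>K\<in>set Ks. K \<in> carrier_mat n n" and L: "L \<in> carrier_mat n n" and Y: "Y \<in> carrier_mat n n"
  shows "mat_adjoint L * kraus_dual n Ks Y * L = kraus_dual n (map (\<lambda>K. K * L) Ks) Y"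
proof -
  have "mat_adjoint L * kraus_dual n Ks Y * L = msum n (map (\<lambda>K. mat_adjoint L * (mat_adjoint K * Y * K) * L) Ks)"
    by (rule kraus_dual_sandwich[symmetric]) (use assms in auto)
  also have "\<dots> = kraus_dual n (map (\<lambda>K. K * L) Ks) Y"
    unfolding kraus_dual_def using assms
    by (auto simp: adjoint_mult[of _ n n] assoc_mult_mat[of _ n n _ n _ n] intro!: msum_cong)
  finally show ?thesis .
qed

lemma msum_concat_map:
  assumes "\<forall>x\<in>set xs. \<forall>y\<in>set (g x). f y \<in> carrier_mat n n"
  shows "msum n (map f (concat (map g xs))) = msum n (map (\<lambda>x. msum n (map f (g x))) xs)"
  using assms
proof (induct xs)
  case Nil then show ?case by simp
next
  case (Cons x xs)
  have "msum n (map f (g x @ concat (map g xs))) = msum n (map f (g x)) + msum n (map f (concat (map g xs)))"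
    by (simp only: map_append, rule msum_append) (use Cons.prems in auto)
  then show ?case using Cons by simp
qed

definition kraus_comp :: "cmat list \<Rightarrow> cmat list \<Rightarrow> cmat list" where
  "kraus_comp Ks Es = concat (map (\<lambda>E. map (\<lambda>K. K * E) Ks) Es)"

lemma kraus_comp_carrier:
  "\<forall>K\<in>set Ks. K \<in> carrier_mat n n \<Longrightarrow> \<forall>E\<in>set Es. E \<in> carrier_mat n n \<Longrightarrow>
   \<forall>F\<in>set (kraus_comp Ks Es). F \<in> carrier_mat n n"
  unfolding kraus_comp_def by auto

lemma kraus_dual_kraus_comp:
  assumes Kc: "\<forall>K\<in>set Ks. K \<in> carrier_mat n n" and Ec: "\<forall>E\<in>set Es. E \<in> carrier_mat n n"
    and Y: "Y \<in> carrier_mat n n"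
  shows "kraus_dual n (kraus_comp Ks Es) Y = kraus_dual n Es (kraus_dual n Ks Y)"
proof -
  have "kraus_dual n (kraus_comp Ks Es) Y = msum n (map (\<lambda>E. kraus_dual n (map (\<lambda>K. K * E) Ks) Y) Es)"
    unfolding kraus_dual_def kraus_comp_def by (rule msum_concat_map) (use Kc Ec Y in auto)
  also have "\<dots> = kraus_dual n Es (kraus_dual n Ks Y)"
    unfolding kraus_dual_def[of n Es] using Kc Ec Y by (auto simp: kraus_dual_mult_right intro!: msum_cong)
  finally show ?thesis .
qed

lemma kraus_dual_one:
  "\<forall>E\<in>set Es. E \<in> carrier_mat n n \<Longrightarrow> kraus_dual n Es (1\<^sub>m n) = msum n (map (\<lambda>E. mat_adjoint E * E) Es)"
  unfolding kraus_dual_def by (rule msum_cong) auto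

lemma cnj_mult_self: "cnj z * z = complex_of_real ((cmod z)^2)"
  by (metis complex_norm_square mult.commute)

lemma mtrace_adjoint_self:
  assumes Z: "(Z::cmat) \<in> carrier_mat n n"
  shows "mtrace (mat_adjoint Z * Z) = complex_of_real (\<Sum>i<n. \<Sum>j<n. (cmod (Z $$ (j,i)))\<^sup>2)"
proof -
  have "mtrace (mat_adjoint Z * Z) = (\<Sum>i<n. (mat_adjoint Z * Z) $$ (i,i))"
    unfolding mtrace_def using Z by (simp only: index_mult_mat(2) adjoint_dims carrier_matD)
  also have "\<dots> = (\<Sum>i<n. \<Sum>j<n. cnj (Z $$ (j,i)) * Z $$ (j,i))"
    by (intro sum.cong refl, subst index_mult_sum'[OF adjoint_carrier[OF Z] Z]) (use Z in auto)
  also have "\<dots> = (\<Sum>i<n. \<Sum>j<n. complex_of_real ((cmod (Z $$ (j,i)))\<^sup>2))"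
    by (intro sum.cong refl) (rule cnj_mult_self)
  finally show ?thesis by simp
qed

lemma msum_adjoint_self_eq_zero:
  assumes Z: "\<forall>x\<in>set xs. Z x \<in> carrier_mat n n" and s: "msum n (map (\<lambda>x. mat_adjoint (Z x) * Z x) xs) = 0\<^sub>m n n"
  shows "\<forall>x\<in>set xs. Z x = 0\<^sub>m n n"
proof
  fix x assume x: "x \<in> set xs"
  define g where "g y = (\<Sum>i<n. \<Sum>j<n. (cmod (Z y $$ (j,i)))\<^sup>2)" for y
  have "0 = mtrace (msum n (map (\<lambda>x. mat_adjoint (Z x) * Z x) xs))" using s by simp
  also have "\<dots> = (\<Sum>y\<leftarrow>xs. mtrace (mat_adjoint (Z y) * Z y))" using Z by simp
  also have "\<dots> = (\<Sum>y\<leftarrow>xs. complex_of_real (g y))"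
    unfolding g_def using Z by (intro arg_cong[where f=sum_list] map_cong refl mtrace_adjoint_self) auto
  also have "\<dots> = complex_of_real (\<Sum>y\<leftarrow>xs. g y)" by (induct xs) auto
  finally have "(\<Sum>y\<leftarrow>xs. g y) = 0" by simp
  moreover have "\<forall>y\<in>set xs. g y \<ge> 0" unfolding g_def by (auto intro!: sum_nonneg)
  ultimately have "\<forall>y\<in>set xs. g y = 0" using sum_list_nonneg_eq_0_iff[of "map g xs"] by auto
  then have gx: "g x = 0" using x by auto
  have Zx: "Z x \<in> carrier_mat n n" using Z x by auto
  show "Z x = 0\<^sub>m n n"
  proof (rule eq_matI)
    fix j i assume ji: "j < dim_row (0\<^sub>m n n :: cmat)" "i < dim_col (0\<^sub>m n n :: cmat)"
    have "(\<Sum>j<n. (cmod (Z x $$ (j,i)))\<^sup>2) = 0"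
      using gx unfolding g_def by (subst (asm) sum_nonneg_eq_0_iff) (use ji in \<open>auto intro: sum_nonneg\<close>)
    then have "(cmod (Z x $$ (j,i)))\<^sup>2 = 0"
      by (subst (asm) sum_nonneg_eq_0_iff) (use ji in auto)
    then show "Z x $$ (j,i) = 0\<^sub>m n n $$ (j,i)" using ji by simp
  qed (use Zx in auto)
qed

lemma adjoint_minus_mult_minus:
  assumes A: "(A::cmat) \<in> carrier_mat n n" and B: "B \<in> carrier_mat n n"
  shows "mat_adjoint (A - B) * (A - B) = (mat_adjoint A * A - mat_adjoint A * B) - (mat_adjoint B * A - mat_adjoint B * B)"
proof -
  have "mat_adjoint (A - B) * (A - B) = (mat_adjoint A - mat_adjoint B) * (A - B)" using adjoint_minus[OF A B] by simp
  also have "\<dots> = mat_adjoint A * (A - B) - mat_adjoint B * (A - B)"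
    by (rule minus_mult_distrib_mat[of _ n n]) (use A B in auto)
  also have "mat_adjoint A * (A - B) = mat_adjoint A * A - mat_adjoint A * B"
    by (rule mult_minus_distrib_mat[of _ n n]) (use A B in auto)
  also have "mat_adjoint B * (A - B) = mat_adjoint B * A - mat_adjoint B * B"
    by (rule mult_minus_distrib_mat[of _ n n]) (use A B in auto)
  finally show ?thesis .
qed

lemma eq_if_minus_eq_zero:
  assumes "(A::cmat) \<in> carrier_mat n n" "B \<in> carrier_mat n n" "A - B = 0\<^sub>m n n"
  shows "A = B"
proof (rule eq_matI)
  fix i j assume ij: "i < dim_row B" "j < dim_col B"
  have "(A - B) $$ (i,j) = 0" using assms(3) ij assms(2) by simp
  moreover have "(A - B) $$ (i,j) = A $$ (i,j) - B $$ (i,j)" using ij assms(1,2) by simp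
  ultimately show "A $$ (i,j) = B $$ (i,j)" by simp
qed (use assms in auto)

lemma msum_commutator_defect:
  assumes Fc: "\<forall>F\<in>set Fs. F \<in> carrier_mat n n" and P: "P \<in> carrier_mat n n" and Ph: "mat_adjoint P = P"
    and X: "X \<in> carrier_mat n n"
  shows "msum n (map (\<lambda>F. mat_adjoint (F * P * X - X * F * P) * (F * P * X - X * F * P)) Fs) =
    (mat_adjoint X * P * kraus_dual n Fs (1\<^sub>m n) * (P * X) - mat_adjoint X * P * kraus_dual n Fs X * P) -
    (P * kraus_dual n Fs (mat_adjoint X) * (P * X) - P * kraus_dual n Fs (mat_adjoint X * X) * P)"
proof -
  note as = assoc_mult_mat[of _ n n _ n _ n]
  define a1 where "a1 F = mat_adjoint X * P * (mat_adjoint F * 1\<^sub>m n * F) * (P * X)" for F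
  define a2 where "a2 F = mat_adjoint X * P * (mat_adjoint F * X * F) * P" for F
  define a3 where "a3 F = P * (mat_adjoint F * mat_adjoint X * F) * (P * X)" for F
  define a4 where "a4 F = P * (mat_adjoint F * (mat_adjoint X * X) * F) * P" for F
  have ac: "\<forall>F\<in>set Fs. a1 F \<in> carrier_mat n n \<and> a2 F \<in> carrier_mat n n \<and> a3 F \<in> carrier_mat n n \<and> a4 F \<in> carrier_mat n n"
    unfolding a1_def a2_def a3_def a4_def using Fc P X by auto
  have "mat_adjoint (F * P * X - X * F * P) * (F * P * X - X * F * P) = (a1 F - a2 F) - (a3 F - a4 F)"
    if "F \<in> set Fs" for F
  proof -
    have F: "F \<in> carrier_mat n n" using that Fc by auto
    then show ?thesis unfolding a1_def a2_def a3_def a4_def using P X Ph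
      by (subst adjoint_minus_mult_minus[of _ n]) (auto simp: as right_mult_one_mat[OF adjoint_carrier[OF F]])
  qed
  then have "msum n (map (\<lambda>F. mat_adjoint (F * P * X - X * F * P) * (F * P * X - X * F * P)) Fs) =
      (msum n (map a1 Fs) - msum n (map a2 Fs)) - (msum n (map a3 Fs) - msum n (map a4 Fs))"
    using ac by (simp add: msum_minus cong: map_cong)
  moreover have "msum n (map a1 Fs) = mat_adjoint X * P * kraus_dual n Fs (1\<^sub>m n) * (P * X)"
    unfolding a1_def by (rule kraus_dual_sandwich) (use Fc P X in auto)
  moreover have "msum n (map a2 Fs) = mat_adjoint X * P * kraus_dual n Fs X * P"
    unfolding a2_def by (rule kraus_dual_sandwich) (use Fc P X in auto)
  moreover have "msum n (map a3 Fs) = P * kraus_dual n Fs (mat_adjoint X) * (P * X)"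
    unfolding a3_def by (rule kraus_dual_sandwich) (use Fc P X in auto)
  moreover have "msum n (map a4 Fs) = P * kraus_dual n Fs (mat_adjoint X * X) * P"
    unfolding a4_def by (rule kraus_dual_sandwich) (use Fc P X in auto)
  ultimately show ?thesis by simp
qed

text \<open>The multiplicative-domain argument: if the compression by P of a unital Kraus dual fixes X,
  X\<dagger> and X\<dagger> X, then the sum over F of Z\<dagger> Z with Z = F P X - X F P vanishes.\<close>

lemma kraus_commute_if_compression_fixed:
  assumes Fc: "\<forall>F\<in>set Fs. F \<in> carrier_mat n n" and P: "P \<in> carrier_mat n n" and Ph: "mat_adjoint P = P"
    and PP: "P * P = P" and X: "X \<in> carrier_mat n n" and PXP: "P * X * P = X"
    and u: "kraus_dual n Fs (1\<^sub>m n) = 1\<^sub>m n"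
    and h1: "P * kraus_dual n Fs X * P = X" and h2: "P * kraus_dual n Fs (mat_adjoint X) * P = mat_adjoint X"
    and h3: "P * kraus_dual n Fs (mat_adjoint X * X) * P = mat_adjoint X * X"
  shows "\<forall>F\<in>set Fs. F * P * X = X * F * P"
proof -
  note as = assoc_mult_mat[of _ n n _ n _ n]
  have PX: "P * X = X" using PXP P X PP by (metis as mult_carrier_sq)
  have "mat_adjoint X * P * kraus_dual n Fs (1\<^sub>m n) * (P * X) = mat_adjoint X * X"
    unfolding u PX using P X by (simp add: as PX)
  moreover have "mat_adjoint X * P * kraus_dual n Fs X * P = mat_adjoint X * X"
    using h1 P X Fc by (simp add: as)
  moreover have "P * kraus_dual n Fs (mat_adjoint X) * (P * X) = (P * kraus_dual n Fs (mat_adjoint X) * P) * X"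
    using P X Fc by (simp add: as)
  then have "P * kraus_dual n Fs (mat_adjoint X) * (P * X) = mat_adjoint X * X" unfolding h2 .
  ultimately have "msum n (map (\<lambda>F. mat_adjoint (F * P * X - X * F * P) * (F * P * X - X * F * P)) Fs) = 0\<^sub>m n n"
    unfolding msum_commutator_defect[OF Fc P Ph X] h3 using X by simp
  then have "\<forall>F\<in>set Fs. F * P * X - X * F * P = 0\<^sub>m n n"
    by (rule msum_adjoint_self_eq_zero[rotated]) (use Fc P X in auto)
  then show ?thesis using Fc P X by (auto intro: eq_if_minus_eq_zero[of _ n])
qed

lemma commute_through_unital_kraus:
  assumes Kc: "\<forall>K\<in>set Ks. K \<in> carrier_mat n n" and u: "kraus_dual n Ks (1\<^sub>m n) = 1\<^sub>m n"
    and A: "A \<in> carrier_mat n n" and B: "B \<in> carrier_mat n n" and X: "X \<in> carrier_mat n n"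
    and cA: "\<forall>K\<in>set Ks. K * A * X = X * (K * A)"
    and cB: "\<forall>K\<in>set Ks. K * B * mat_adjoint X = mat_adjoint X * (K * B)"
  shows "mat_adjoint B * A * X = X * (mat_adjoint B * A)"
proof -
  note as = assoc_mult_mat[of _ n n _ n _ n]
  have pw: "mat_adjoint B * (mat_adjoint K * 1\<^sub>m n * K) * (A * X) = X * mat_adjoint B * (mat_adjoint K * 1\<^sub>m n * K) * A"
    if K: "K \<in> set Ks" for K
  proof -
    have Kc': "K \<in> carrier_mat n n" using K Kc by auto
    have l: "mat_adjoint (K * B * mat_adjoint X) = X * (mat_adjoint B * mat_adjoint K)"
      using Kc' B X by (simp add: as)
    have r: "mat_adjoint (mat_adjoint X * (K * B)) = mat_adjoint B * (mat_adjoint K * X)"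
      using Kc' B X by (simp add: adjoint_mult[of _ n n _ n] as)
    from cB K have "K * B * mat_adjoint X = mat_adjoint X * (K * B)" by blast
    then have B': "mat_adjoint B * (mat_adjoint K * X) = X * (mat_adjoint B * mat_adjoint K)"
      using l r by metis
    have "mat_adjoint B * (mat_adjoint K * 1\<^sub>m n * K) * (A * X) = mat_adjoint B * mat_adjoint K * (K * A * X)"
      using Kc' A B X by (simp add: as)
    also have "\<dots> = (mat_adjoint B * (mat_adjoint K * X)) * (K * A)"
      using bspec[OF cA K] Kc' A B X by (simp add: as)
    also have "\<dots> = (X * (mat_adjoint B * mat_adjoint K)) * (K * A)" unfolding B' ..
    also have "\<dots> = X * mat_adjoint B * (mat_adjoint K * 1\<^sub>m n * K) * A"
      using Kc' A B X by (simp add: as)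
    finally show ?thesis .
  qed
  have "mat_adjoint B * kraus_dual n Ks (1\<^sub>m n) * (A * X) =
      msum n (map (\<lambda>K. mat_adjoint B * (mat_adjoint K * 1\<^sub>m n * K) * (A * X)) Ks)"
    by (rule kraus_dual_sandwich[symmetric]) (use Kc A B X in auto)
  also have "\<dots> = msum n (map (\<lambda>K. X * mat_adjoint B * (mat_adjoint K * 1\<^sub>m n * K) * A) Ks)"
    by (rule msum_cong) (rule pw)
  also have "\<dots> = X * mat_adjoint B * kraus_dual n Ks (1\<^sub>m n) * A"
    by (rule kraus_dual_sandwich) (use Kc A B X in auto)
  finally show ?thesis unfolding u using A B X by (simp add: as)
qed

lemma compressed_product_commute:
  assumes Kc: "\<forall>K\<in>set Ks. K \<in> carrier_mat n n" and Ku: "kraus_dual n Ks (1\<^sub>m n) = 1\<^sub>m n"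
    and Ec: "\<forall>E\<in>set Es. E \<in> carrier_mat n n" and P: "P \<in> carrier_mat n n" and Ph: "mat_adjoint P = P"
    and X: "X \<in> carrier_mat n n" and b: "b < length Es" and c: "c < length Es"
    and comm: "\<forall>Z\<in>{X, mat_adjoint X}. \<forall>F\<in>set (kraus_comp Ks Es). F * P * Z = Z * F * P"
  shows "(P * mat_adjoint (Es ! c) * (Es ! b) * P) * X = X * (P * mat_adjoint (Es ! c) * (Es ! b) * P)"
proof -
  note as = assoc_mult_mat[of _ n n _ n _ n]
  have Eb: "Es ! b \<in> carrier_mat n n" and Ec': "Es ! c \<in> carrier_mat n n" using Ec b c by auto
  have comm_E: "K * (Es ! i * P) * Z = Z * (K * (Es ! i * P))"
    if K: "K \<in> set Ks" and i: "i < length Es" and Z: "Z \<in> {X, mat_adjoint X}" for K i Z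
  proof -
    have "K * Es ! i \<in> set (kraus_comp Ks Es)" unfolding kraus_comp_def using K i by auto
    then have "K * Es ! i * P * Z = Z * (K * Es ! i) * P" using comm Z by blast
    then show ?thesis using K Kc i Ec P X Z by (auto simp: as)
  qed
  have "mat_adjoint (Es ! c * P) * (Es ! b * P) * X = X * (mat_adjoint (Es ! c * P) * (Es ! b * P))"
    by (rule commute_through_unital_kraus[OF Kc Ku _ _ X]) (use Eb Ec' P comm_E b c in auto)
  then show ?thesis using Eb Ec' P Ph by (simp add: adjoint_mult[of _ n n] as)
qed

lemma correctable_imp_commute:
  assumes op: "orth_proj n P" and Ec: "\<forall>E \<in> set Es. E \<in> carrier_mat n n"
    and es: "msum n (map (\<lambda>E. mat_adjoint E * E) Es) = 1\<^sub>m n"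
    and sa: "star_subalgebra_on n P \<A>"
    and ch: "channel n R" and rec: "\<forall>X \<in> \<A>. P * dual_map n (R \<circ> kraus_map n Es) X * P = P * X * P"
  shows "\<forall>X \<in> \<A>. \<forall>b < length Es. \<forall>c < length Es.
            (P * mat_adjoint (Es ! c) * (Es ! b) * P) * X = X * (P * mat_adjoint (Es ! c) * (Es ! b) * P)"
proof (intro ballI allI impI)
  fix X b c assume X: "X \<in> \<A>" and b: "b < length Es" and c: "c < length Es"
  have P: "P \<in> carrier_mat n n" and PP: "P * P = P" and Ph: "mat_adjoint P = P"
    using op unfolding orth_proj_def by auto
  have Ac: "\<A> \<subseteq> carrier_mat n n" and APA: "\<forall>X\<in>\<A>. P * X * P = X"
    and Amult: "\<forall>X\<in>\<A>. \<forall>Y\<in>\<A>. X * Y \<in> \<A>" and Aadj: "\<forall>X\<in>\<A>. mat_adjoint X \<in> \<A>"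
    using sa unfolding star_subalgebra_on_def by auto
  obtain Ks where Kc: "\<forall>K\<in>set Ks. K \<in> carrier_mat n n" and RK: "\<forall>\<rho>\<in>carrier_mat n n. R \<rho> = kraus_map n Ks \<rho>"
    using kraus_representation ch unfolding channel_def by blast
  have Ku: "kraus_dual n Ks (1\<^sub>m n) = 1\<^sub>m n"
    by (rule kraus_dual_one_if_trace_preserving[OF Kc RK]) (use ch in \<open>auto simp: channel_def\<close>)
  define Fs where "Fs = kraus_comp Ks Es"
  have Fc: "\<forall>F\<in>set Fs. F \<in> carrier_mat n n" unfolding Fs_def by (rule kraus_comp_carrier[OF Kc Ec])
  have Fu: "kraus_dual n Fs (1\<^sub>m n) = 1\<^sub>m n"
    unfolding Fs_def kraus_dual_kraus_comp[OF Kc Ec one_carrier_mat] Ku kraus_dual_one[OF Ec] es ..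
  have fixed: "P * kraus_dual n Fs Y * P = Y" if Y: "Y \<in> \<A>" for Y
  proof -
    have Yc: "Y \<in> carrier_mat n n" using Y Ac by auto
    have "P * kraus_dual n Fs Y * P = P * dual_map n (R \<circ> kraus_map n Es) Y * P"
      unfolding Fs_def kraus_dual_kraus_comp[OF Kc Ec Yc] dual_map_kraus_comp[OF Kc Ec RK Yc] ..
    then show ?thesis using rec Y APA by auto
  qed
  have "\<forall>F\<in>set Fs. F * P * Z = Z * F * P" if Z: "Z \<in> \<A>" for Z
    using Z Ac APA Aadj Amult
    by (intro kraus_commute_if_compression_fixed[OF Fc P Ph PP _ _ Fu] fixed) auto
  then show "(P * mat_adjoint (Es ! c) * (Es ! b) * P) * X = X * (P * mat_adjoint (Es ! c) * (Es ! b) * P)"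
    using X Aadj Ac unfolding Fs_def by (intro compressed_product_commute[OF Kc Ku Ec P Ph _ b c]) auto
qed
section \<open>Polar decomposition\<close>

lemma index_adjoint_self_diag:
  assumes Z: "(Z::cmat) \<in> carrier_mat r c" and k: "k < c"
  shows "(mat_adjoint Z * Z) $$ (k,k) = complex_of_real (\<Sum>i<r. (cmod (Z $$ (i,k)))\<^sup>2)"
proof -
  have "(mat_adjoint Z * Z) $$ (k,k) = (\<Sum>i<r. cnj (Z $$ (i,k)) * Z $$ (i,k))"
    by (subst index_mult_sum'[OF adjoint_carrier[OF Z] Z k k]) (use Z k in auto)
  also have "\<dots> = (\<Sum>i<r. complex_of_real ((cmod (Z $$ (i,k)))\<^sup>2))"
    by (intro sum.cong refl) (rule cnj_mult_self)
  finally show ?thesis by simp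
qed

lemma adjoint_self_mult_eq_zero:
  assumes Z: "(Z::cmat) \<in> carrier_mat r c" and z: "mat_adjoint Z * Z = 0\<^sub>m c c"
  shows "Z = 0\<^sub>m r c"
proof (rule eq_matI)
  fix i k assume ik: "i < dim_row (0\<^sub>m r c :: cmat)" "k < dim_col (0\<^sub>m r c :: cmat)"
  have "(mat_adjoint Z * Z) $$ (k,k) = 0" using z ik by simp
  then have "complex_of_real (\<Sum>i<r. (cmod (Z $$ (i,k)))\<^sup>2) = 0"
    using index_adjoint_self_diag[OF Z, of k] ik by simp
  then have "(\<Sum>i<r. (cmod (Z $$ (i,k)))\<^sup>2) = 0" by (simp only: of_real_eq_0_iff)
  then have "(cmod (Z $$ (i,k)))\<^sup>2 = 0"
    by (subst (asm) sum_nonneg_eq_0_iff) (use ik in auto)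
  then show "Z $$ (i,k) = 0\<^sub>m r c $$ (i,k)" using ik by simp
qed (use Z in auto)

locale gram_diagonalization =
  fixes S :: cmat and n N :: nat and V :: cmat and d :: "nat \<Rightarrow> real"
  assumes S: "S \<in> carrier_mat n N" and V: "unitary N V"
    and gram_eq: "mat_adjoint S * S = V * real_diag_mat N d * mat_adjoint V"
begin

definition diag_fun :: "(real \<Rightarrow> real) \<Rightarrow> cmat" where
  "diag_fun f = V * real_diag_mat N (\<lambda>k. f (d k)) * mat_adjoint V"

lemma diag_fun_carrier[simp]: "diag_fun f \<in> carrier_mat N N"
  unfolding diag_fun_def using unitaryD(1)[OF V] by simp

lemma adjoint_diag_fun: "mat_adjoint (diag_fun f) = diag_fun f"
  unfolding diag_fun_def by (rule adjoint_unitary_conj_real_diag[OF unitaryD(1)[OF V]])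

lemma diag_fun_mult: "diag_fun f * diag_fun g = diag_fun (\<lambda>x. f x * g x)"
  unfolding diag_fun_def by (rule unitary_conj_real_diag_mult[OF V])

lemma diag_fun_cong: "(\<And>k. k < N \<Longrightarrow> f (d k) = g (d k)) \<Longrightarrow> diag_fun f = diag_fun g"
  unfolding diag_fun_def by (metis real_diag_mat_cong)

lemma diag_fun_add: "diag_fun f + diag_fun g = diag_fun (\<lambda>x. f x + g x)"
proof -
  note Vc = unitaryD(1)[OF V]
  have "diag_fun f + diag_fun g =
      (V * real_diag_mat N (\<lambda>k. f (d k)) + V * real_diag_mat N (\<lambda>k. g (d k))) * mat_adjoint V"
    unfolding diag_fun_def using Vc by (intro add_mult_distrib_mat[symmetric]) auto
  also have "V * real_diag_mat N (\<lambda>k. f (d k)) + V * real_diag_mat N (\<lambda>k. g (d k)) =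
      V * real_diag_mat N (\<lambda>k. f (d k) + g (d k))"
    by (simp add: mult_add_distrib_mat[OF Vc real_diag_mat_carrier real_diag_mat_carrier, symmetric] real_diag_mat_add)
  finally show ?thesis unfolding diag_fun_def .
qed

lemma gram_diag_fun: "mat_adjoint S * S = diag_fun (\<lambda>x. x)"
  unfolding diag_fun_def gram_eq by simp

lemma diag_fun_one: "diag_fun (\<lambda>x. 1) = 1\<^sub>m N"
  unfolding diag_fun_def using unitaryD[OF V] by (simp add: real_diag_mat_one)

lemma diag_fun_zero: "diag_fun (\<lambda>x. 0) = 0\<^sub>m N N"
  unfolding diag_fun_def using unitaryD[OF V] by (simp add: real_diag_mat_zero)

lemma eigenvalue_nonneg:
  assumes k: "k < N"
  shows "d k \<ge> 0"
proof -
  note V' = unitaryD[OF V]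
  have SV: "S * V \<in> carrier_mat n N" using S V' by (intro mult_carrier_mat) auto
  have "mat_adjoint (S * V) * (S * V) = mat_adjoint V * (mat_adjoint S * (S * V))"
    unfolding adjoint_mult[OF S V'(1)] by (rule assoc_mult_mat[OF adjoint_carrier[OF V'(1)] adjoint_carrier[OF S] SV])
  also have "mat_adjoint S * (S * V) = mat_adjoint S * S * V"
    by (rule assoc_mult_mat[OF adjoint_carrier[OF S] S V'(1), symmetric])
  also have "mat_adjoint V * (mat_adjoint S * S * V) = mat_adjoint V * (mat_adjoint S * S) * V"
    by (rule assoc_mult_mat[OF adjoint_carrier[OF V'(1)] mult_carrier_mat[OF adjoint_carrier[OF S] S] V'(1), symmetric])
  also have "\<dots> = real_diag_mat N d" unfolding gram_eq by (rule unitary_conj_cancel[OF V real_diag_mat_carrier])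
  finally have "(mat_adjoint (S * V) * (S * V)) $$ (k,k) = complex_of_real (d k)"
    using k by (simp add: real_diag_mat_def)
  moreover have "(mat_adjoint (S * V) * (S * V)) $$ (k,k) = complex_of_real (\<Sum>i<n. (cmod ((S * V) $$ (i,k)))\<^sup>2)"
    by (rule index_adjoint_self_diag[OF SV k])
  ultimately have "d k = (\<Sum>i<n. (cmod ((S * V) $$ (i,k)))\<^sup>2)" by (metis of_real_eq_iff)
  then show ?thesis by (simp add: sum_nonneg)
qed

lemma commute_diag_fun:
  assumes Y: "Y \<in> carrier_mat N N" and comm: "Y * (mat_adjoint S * S) = (mat_adjoint S * S) * Y"
  shows "Y * diag_fun f = diag_fun f * Y"
  unfolding diag_fun_def by (rule commute_unitary_conj_real_diag_fun[OF V Y comm[unfolded gram_eq]])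

abbreviation gram_sqrt :: cmat where "gram_sqrt \<equiv> diag_fun sqrt"

abbreviation gram_sqrt_pinv :: cmat where
  "gram_sqrt_pinv \<equiv> diag_fun (\<lambda>x. if x > 0 then 1 / sqrt x else 0)"

abbreviation support_proj :: cmat where "support_proj \<equiv> diag_fun (\<lambda>x. if x > 0 then 1 else 0)"

abbreviation polar :: cmat where "polar \<equiv> S * gram_sqrt_pinv"

lemma polar_carrier: "polar \<in> carrier_mat n N"
  using S by (intro mult_carrier_mat) auto

lemma gram_sqrt_sq: "gram_sqrt * gram_sqrt = mat_adjoint S * S"
  unfolding diag_fun_mult gram_diag_fun using eigenvalue_nonneg by (intro diag_fun_cong) simp

lemma adjoint_mult_diag_fun: "mat_adjoint (S * diag_fun f) = diag_fun f * mat_adjoint S"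
  using adjoint_mult[OF S diag_fun_carrier] adjoint_diag_fun by simp

lemma gram_sandwich: "mat_adjoint (S * diag_fun f) * (S * diag_fun g) = diag_fun (\<lambda>x. f x * (x * g x))"
proof -
  have "mat_adjoint (S * diag_fun f) * (S * diag_fun g) = diag_fun f * (mat_adjoint S * (S * diag_fun g))"
    unfolding adjoint_mult_diag_fun
    by (rule assoc_mult_mat[OF diag_fun_carrier adjoint_carrier[OF S] mult_carrier_mat[OF S diag_fun_carrier]])
  also have "mat_adjoint S * (S * diag_fun g) = diag_fun (\<lambda>x. x) * diag_fun g"
    unfolding gram_diag_fun[symmetric] by (rule assoc_mult_mat[OF adjoint_carrier[OF S] S diag_fun_carrier, symmetric])
  finally show ?thesis by (simp add: diag_fun_mult)
qed

lemma mult_support_proj: "S * support_proj = S"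
proof -
  let ?K = "diag_fun (\<lambda>x. if x > 0 then 0 else 1)"
  have "mat_adjoint (S * ?K) * (S * ?K) = diag_fun (\<lambda>x. 0)"
    unfolding gram_sandwich by (intro diag_fun_cong, frule eigenvalue_nonneg) (auto simp: not_less)
  then have SK: "S * ?K = 0\<^sub>m n N"
    unfolding diag_fun_zero by (rule adjoint_self_mult_eq_zero[rotated]) (rule mult_carrier_mat[OF S diag_fun_carrier])
  have "support_proj + ?K = 1\<^sub>m N"
    unfolding diag_fun_add diag_fun_one[symmetric] by (rule diag_fun_cong) simp
  then have "S = S * (support_proj + ?K)" using S by simp
  also have "\<dots> = S * support_proj + S * ?K" by (rule mult_add_distrib_mat[OF S diag_fun_carrier diag_fun_carrier])
  finally show ?thesis unfolding SK using mult_carrier_mat[OF S diag_fun_carrier] by simp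
qed

lemma adjoint_polar_mult: "mat_adjoint polar * S = gram_sqrt"
proof -
  have "mat_adjoint polar * S = gram_sqrt_pinv * (mat_adjoint S * S)"
    unfolding adjoint_mult_diag_fun by (rule assoc_mult_mat[OF diag_fun_carrier adjoint_carrier[OF S] S])
  also have "\<dots> = gram_sqrt"
    unfolding gram_diag_fun diag_fun_mult by (intro diag_fun_cong, frule eigenvalue_nonneg) (auto simp: real_div_sqrt)
  finally show ?thesis .
qed

lemma polar_mult_gram_sqrt: "polar * gram_sqrt = S"
proof -
  have "polar * gram_sqrt = S * (gram_sqrt_pinv * gram_sqrt)"
    by (rule assoc_mult_mat[OF S diag_fun_carrier diag_fun_carrier])
  also have "gram_sqrt_pinv * gram_sqrt = support_proj"
    unfolding diag_fun_mult by (rule diag_fun_cong) simp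
  finally show ?thesis using mult_support_proj by simp
qed

lemma polar_partial_isometry: "polar * (mat_adjoint polar * polar) = polar"
proof -
  have "mat_adjoint polar * polar = support_proj"
    unfolding gram_sandwich by (intro diag_fun_cong, frule eigenvalue_nonneg) (auto simp: real_div_sqrt)
  moreover have "polar * support_proj = S * (gram_sqrt_pinv * support_proj)"
    by (rule assoc_mult_mat[OF S diag_fun_carrier diag_fun_carrier])
  moreover have "gram_sqrt_pinv * support_proj = gram_sqrt_pinv"
    unfolding diag_fun_mult by (rule diag_fun_cong) simp
  ultimately show ?thesis by simp
qed

end

lemma polar_decomposition:
  assumes S: "(S::cmat) \<in> carrier_mat n N"
  shows "\<exists>U B. U \<in> carrier_mat n N \<and> B \<in> carrier_mat N N \<and> mat_adjoint B = B \<and>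
    B * B = mat_adjoint S * S \<and> U * B = S \<and> mat_adjoint U * S = B \<and> U * (mat_adjoint U * U) = U \<and>
    (\<forall>Y\<in>carrier_mat N N. Y * (mat_adjoint S * S) = (mat_adjoint S * S) * Y \<longrightarrow> Y * B = B * Y)"
proof -
  have "mat_adjoint S * S \<in> carrier_mat N N" "mat_adjoint (mat_adjoint S * S) = mat_adjoint S * S"
    using S adjoint_mult[of "mat_adjoint S" N n S N] by auto
  then obtain V d where "unitary N V" "mat_adjoint S * S = V * real_diag_mat N d * mat_adjoint V"
    using hermitian_diagonalization by blast
  then interpret gram_diagonalization S n N V d using S by unfold_locales
  show ?thesis
    using polar_carrier adjoint_diag_fun gram_sqrt_sq polar_mult_gram_sqrt adjoint_polar_mult
      polar_partial_isometry commute_diag_fun by (intro exI[of _ polar] exI[of _ gram_sqrt]) auto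
qed
section \<open>Sufficiency of the commutation condition\<close>

definition range_complement :: "nat \<Rightarrow> cmat \<Rightarrow> cmat" where
  "range_complement n U = 1\<^sub>m n - U * mat_adjoint U"

lemma range_complement_carrier[simp]: "U \<in> carrier_mat n N \<Longrightarrow> range_complement n U \<in> carrier_mat n n"
  unfolding range_complement_def by (auto intro: mult_carrier_mat)

lemma adjoint_range_complement:
  assumes U: "U \<in> carrier_mat n N"
  shows "mat_adjoint (range_complement n U) = range_complement n U"
  unfolding range_complement_def using U adjoint_mult[OF U adjoint_carrier[OF U]]
  by (simp add: adjoint_minus[of _ n n] mult_carrier_mat)

lemma range_complement_mult:
  assumes U: "U \<in> carrier_mat n N" and W: "W \<in> carrier_mat n k" and UUW: "U * (mat_adjoint U * W) = W"
  shows "range_complement n U * W = 0\<^sub>m n k"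
proof -
  have "range_complement n U * W = W - U * mat_adjoint U * W"
    unfolding range_complement_def using U W by (simp add: minus_mult_distrib_mat[of _ n n] mult_carrier_mat)
  then show ?thesis using U W UUW by (simp add: assoc_mult_mat[of _ n N _ n _ k])
qed

lemma range_complement_idem:
  assumes U: "U \<in> carrier_mat n N" and pi: "U * (mat_adjoint U * U) = U"
  shows "range_complement n U * range_complement n U = range_complement n U"
proof -
  let ?C = "range_complement n U" and ?W = "U * mat_adjoint U"
  have Ua: "mat_adjoint U \<in> carrier_mat N n" using U by simp
  have W: "?W \<in> carrier_mat n n" and Cc: "?C \<in> carrier_mat n n"
    using mult_carrier_mat[OF U Ua] range_complement_carrier[OF U] by auto
  have "U * (mat_adjoint U * ?W) = U * (mat_adjoint U * U) * mat_adjoint U"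
    by (simp only: assoc_mult_mat[OF Ua U Ua] assoc_mult_mat[OF U mult_carrier_mat[OF Ua U] Ua])
  then have "?C * ?W = 0\<^sub>m n n" unfolding pi by (intro range_complement_mult[OF U W])
  moreover have "?C * ?C = ?C * 1\<^sub>m n - ?C * ?W"
    by (subst (2) range_complement_def) (rule mult_minus_distrib_mat[OF Cc one_carrier_mat W])
  ultimately show ?thesis using Cc by (simp, intro eq_matI, auto)
qed

text \<open>The recovery channel for a partial isometry U from C^m \<otimes> C^n to C^n: it undoes U on the
  range of U (one Kraus operator per block of U) and acts as the projection onto its complement.\<close>

definition recovery_kraus :: "nat \<Rightarrow> nat \<Rightarrow> cmat \<Rightarrow> cmat list" where
  "recovery_kraus n m U = map (\<lambda>a. mat_adjoint (hblock n U a)) [0..<m] @ [range_complement n U]"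

lemma recovery_kraus_carrier:
  "U \<in> carrier_mat n (m*n) \<Longrightarrow> \<forall>K\<in>set (recovery_kraus n m U). K \<in> carrier_mat n n"
  unfolding recovery_kraus_def by auto

lemma kraus_dual_recovery_kraus:
  assumes U: "U \<in> carrier_mat n (m*n)" and Y: "Y \<in> carrier_mat n n"
  shows "kraus_dual n (recovery_kraus n m U) Y =
    U * id_tensor m n Y * mat_adjoint U + range_complement n U * Y * range_complement n U"
proof -
  let ?C = "range_complement n U"
  have Cc: "?C \<in> carrier_mat n n" using U by simp
  have "kraus_dual n (recovery_kraus n m U) Y =
      msum n (map (\<lambda>a. hblock n U a * Y * mat_adjoint (hblock n U a)) [0..<m] @ [mat_adjoint ?C * Y * ?C])"
    unfolding kraus_dual_def recovery_kraus_def by (simp add: comp_def)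
  also have "\<dots> = msum n (map (\<lambda>a. hblock n U a * Y * mat_adjoint (hblock n U a)) [0..<m]) + msum n [mat_adjoint ?C * Y * ?C]"
    by (rule msum_append) (use Y Cc in auto)
  also have "msum n (map (\<lambda>a. hblock n U a * Y * mat_adjoint (hblock n U a)) [0..<m]) = U * id_tensor m n Y * mat_adjoint U"
    unfolding mult_id_tensor_mult_adjoint[OF U Y] kraus_map_def by (simp add: comp_def)
  also have "msum n [mat_adjoint ?C * Y * ?C] = ?C * Y * ?C"
    using Y Cc by (simp add: adjoint_range_complement[OF U])
  finally show ?thesis .
qed

lemma kraus_dual_recovery_kraus_one:
  assumes U: "U \<in> carrier_mat n (m*n)" and pi: "U * (mat_adjoint U * U) = U"
  shows "kraus_dual n (recovery_kraus n m U) (1\<^sub>m n) = 1\<^sub>m n"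
proof -
  have "kraus_dual n (recovery_kraus n m U) (1\<^sub>m n) = U * mat_adjoint U + range_complement n U"
    unfolding kraus_dual_recovery_kraus[OF U one_carrier_mat] id_tensor_one
    by (simp only: right_mult_one_mat[OF U] right_mult_one_mat[OF range_complement_carrier[OF U]]
        range_complement_idem[OF U pi])
  also have "\<dots> = 1\<^sub>m n" unfolding range_complement_def using U by (intro eq_matI) (auto intro: mult_carrier_mat)
  finally show ?thesis .
qed

text \<open>With the polar decomposition S = U B, conjugating the recovered observable by S replaces
  U by B, and B commutes with 1 \<otimes> X, which leaves (1 \<otimes> X) S\<dagger> S.\<close>

lemma adjoint_mult_kraus_dual_recovery_mult:
  assumes S: "S \<in> carrier_mat n (m*n)" and U: "U \<in> carrier_mat n (m*n)" and B: "B \<in> carrier_mat (m*n) (m*n)"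
    and Bh: "mat_adjoint B = B" and UB: "U * B = S" and US: "mat_adjoint U * S = B" and BB: "B * B = mat_adjoint S * S"
    and X: "X \<in> carrier_mat n n" and comm: "id_tensor m n X * B = B * id_tensor m n X"
  shows "mat_adjoint S * kraus_dual n (recovery_kraus n m U) X * S = id_tensor m n X * (mat_adjoint S * S)"
proof -
  let ?N = "m*n" and ?I = "id_tensor m n X" and ?C = "range_complement n U"
  have Sa: "mat_adjoint S \<in> carrier_mat ?N n" and Ua: "mat_adjoint U \<in> carrier_mat ?N n"
    and I: "?I \<in> carrier_mat ?N ?N" and Cc: "?C \<in> carrier_mat n n"
    using S U range_complement_carrier[OF U] by auto
  have SU: "mat_adjoint S * U = B"
    using arg_cong[OF US, of mat_adjoint] Bh by (simp add: adjoint_mult[OF Ua S])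
  have CS: "?C * S = 0\<^sub>m n ?N" using U S UB US by (intro range_complement_mult) auto
  have "mat_adjoint S * (U * ?I * mat_adjoint U) * S = mat_adjoint S * U * ?I * mat_adjoint U * S"
    by (simp only: assoc_mult_mat[OF Sa U I] assoc_mult_mat[OF Sa mult_carrier_mat[OF U I] Ua])
  also have "\<dots> = (mat_adjoint S * U) * ?I * (mat_adjoint U * S)"
    by (rule assoc_mult_mat[OF mult_carrier_mat[OF mult_carrier_mat[OF Sa U] I] Ua S])
  also have "\<dots> = ?I * (mat_adjoint S * S)"
    unfolding SU US comm[symmetric] BB[symmetric] by (rule assoc_mult_mat[OF I B B])
  finally have first: "mat_adjoint S * (U * ?I * mat_adjoint U) * S = ?I * (mat_adjoint S * S)" .
  have "mat_adjoint S * (?C * X * ?C) * S = mat_adjoint S * ?C * X * ?C * S"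
    by (simp only: assoc_mult_mat[OF Sa Cc X] assoc_mult_mat[OF Sa mult_carrier_mat[OF Cc X] Cc])
  also have "\<dots> = (mat_adjoint S * ?C) * X * (?C * S)"
    by (rule assoc_mult_mat[OF mult_carrier_mat[OF mult_carrier_mat[OF Sa Cc] X] Cc S])
  also have "mat_adjoint S * ?C = mat_adjoint (?C * S)"
    using adjoint_mult[OF Cc S] adjoint_range_complement[OF U] by simp
  finally have second: "mat_adjoint S * (?C * X * ?C) * S = 0\<^sub>m ?N ?N" unfolding CS using X by simp
  have A: "U * ?I * mat_adjoint U \<in> carrier_mat n n" and D: "?C * X * ?C \<in> carrier_mat n n"
    using mult_carrier_mat[OF mult_carrier_mat[OF U I] Ua] mult_carrier_mat[OF mult_carrier_mat[OF Cc X] Cc] .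
  have "mat_adjoint S * kraus_dual n (recovery_kraus n m U) X * S =
      (mat_adjoint S * (U * ?I * mat_adjoint U) + mat_adjoint S * (?C * X * ?C)) * S"
    unfolding kraus_dual_recovery_kraus[OF U X] mult_add_distrib_mat[OF Sa A D] ..
  also have "\<dots> = mat_adjoint S * (U * ?I * mat_adjoint U) * S + mat_adjoint S * (?C * X * ?C) * S"
    by (rule add_mult_distrib_mat[OF mult_carrier_mat[OF Sa A] mult_carrier_mat[OF Sa D] S])
  finally show ?thesis
    unfolding first second using mult_carrier_mat[OF I mult_carrier_mat[OF Sa S]] by simp
qed

locale kl_condition =
  fixes n :: nat and P :: cmat and Es :: "cmat list" and \<A> :: "cmat set"
  assumes orth: "orth_proj n P" and Es_carrier: "\<forall>E \<in> set Es. E \<in> carrier_mat n n"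
    and Es_sum: "msum n (map (\<lambda>E. mat_adjoint E * E) Es) = 1\<^sub>m n"
    and subalg: "star_subalgebra_on n P \<A>"
    and commute: "\<forall>X \<in> \<A>. \<forall>b < length Es. \<forall>c < length Es.
            (P * mat_adjoint (Es ! c) * (Es ! b) * P) * X = X * (P * mat_adjoint (Es ! c) * (Es ! b) * P)"
begin

abbreviation m :: nat where "m \<equiv> length Es"

lemma P_carrier: "P \<in> carrier_mat n n" and P_idem: "P * P = P" and P_herm: "mat_adjoint P = P"
  using orth unfolding orth_proj_def by auto

lemma A_carrier: "X \<in> \<A> \<Longrightarrow> X \<in> carrier_mat n n" and A_compressed: "X \<in> \<A> \<Longrightarrow> P * X * P = X"
  using subalg unfolding star_subalgebra_on_def by auto

text \<open>The block row (E_1 P, ..., E_m P); its Gram matrix has the blocks P E_c\<dagger> E_b P.\<close>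

definition kraus_row :: cmat where "kraus_row = hconcat n (map (\<lambda>E. E * P) Es)"

lemma kraus_row_carrier: "kraus_row \<in> carrier_mat n (m*n)"
  unfolding kraus_row_def using hconcat_carrier by (metis length_map)

lemma compress_kraus_dual:
  assumes Y: "Y \<in> carrier_mat n n"
  shows "P * kraus_dual n Es Y * P = partial_trace m n (mat_adjoint kraus_row * Y * kraus_row)"
proof -
  have "P * kraus_dual n Es Y * P = kraus_dual n (map (\<lambda>E. E * P) Es) Y"
    using kraus_dual_mult_right[OF Es_carrier P_carrier Y] P_herm by simp
  also have "\<dots> = partial_trace m n (mat_adjoint kraus_row * Y * kraus_row)"
    unfolding kraus_row_def using Es_carrier P_carrier Y by (subst kraus_dual_eq_partial_trace) auto
  finally show ?thesis .
qed

lemma index_gram: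
  assumes c: "c < m" and b: "b < m" and i: "i < n" and j: "j < n"
  shows "(mat_adjoint kraus_row * kraus_row) $$ (c*n+i, b*n+j) = (P * mat_adjoint (Es ! c) * (Es ! b) * P) $$ (i,j)"
proof -
  have Ec: "Es ! c \<in> carrier_mat n n" and Eb: "Es ! b \<in> carrier_mat n n" using Es_carrier c b by auto
  have "mat_adjoint kraus_row * kraus_row = mat_adjoint kraus_row * 1\<^sub>m n * kraus_row" using kraus_row_carrier by simp
  then show ?thesis
    unfolding kraus_row_def using index_adjoint_hconcat_sandwich[of "map (\<lambda>E. E * P) Es" n "1\<^sub>m n" c b i j]
      assms Es_carrier P_carrier Ec Eb P_herm
    by (simp add: adjoint_mult[of _ n n] assoc_mult_mat[of _ n n _ n _ n])
qed

lemma gram_commute_id_tensor: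
  assumes X: "X \<in> \<A>"
  shows "id_tensor m n X * (mat_adjoint kraus_row * kraus_row) = (mat_adjoint kraus_row * kraus_row) * id_tensor m n X"
proof (rule eq_matI)
  let ?M = "mat_adjoint kraus_row * kraus_row"
  have Xc: "X \<in> carrier_mat n n" and Mc: "?M \<in> carrier_mat (m*n) (m*n)"
    using A_carrier[OF X] kraus_row_carrier by (auto intro: mult_carrier_mat)
  fix p q assume "p < dim_row (?M * id_tensor m n X)" "q < dim_col (?M * id_tensor m n X)"
  then have p: "p < m*n" and q: "q < m*n" using Mc by auto
  define c i b j where "c = p div n" "i = p mod n" "b = q div n" "j = q mod n"
  have ci: "c < m" "i < n" "b < m" "j < n" using p q unfolding c_i_b_j_def by (auto simp: block_div_less block_mod_less)
  have pe: "p = c*n+i" and qe: "q = b*n+j" unfolding c_i_b_j_def by auto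
  let ?G = "P * mat_adjoint (Es ! c) * (Es ! b) * P"
  have Gc: "?G \<in> carrier_mat n n" using Es_carrier ci P_carrier by simp
  have "(id_tensor m n X * ?M) $$ (p,q) = (\<Sum>l<n. X $$ (i,l) * ?G $$ (l,j))"
    unfolding index_id_tensor_mult[OF Mc Xc p q] unfolding c_i_b_j_def[symmetric] qe
    using ci by (intro sum.cong refl) (simp add: index_gram)
  also have "\<dots> = (?G * X) $$ (i,j)"
    using commute X ci Gc Xc by (simp add: index_mult_sum'[OF Xc Gc ci(2) ci(4), symmetric])
  also have "\<dots> = (\<Sum>l<n. ?M $$ (p, b*n + l) * X $$ (l, j))"
    unfolding pe using ci by (simp add: index_mult_sum'[OF Gc Xc ci(2) ci(4)] index_gram)
  also have "\<dots> = (?M * id_tensor m n X) $$ (p,q)"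
    unfolding c_i_b_j_def by (rule index_mult_id_tensor[OF Mc Xc p q, symmetric])
  finally show "(id_tensor m n X * ?M) $$ (p,q) = (?M * id_tensor m n X) $$ (p,q)" .
qed (use kraus_row_carrier in auto)

lemma partial_trace_gram: "partial_trace m n (mat_adjoint kraus_row * kraus_row) = P"
proof -
  have "partial_trace m n (mat_adjoint kraus_row * kraus_row) = P * kraus_dual n Es (1\<^sub>m n) * P"
    using compress_kraus_dual[OF one_carrier_mat] kraus_row_carrier by simp
  also have "\<dots> = P" using Es_sum kraus_dual_one[OF Es_carrier] P_carrier P_idem by simp
  finally show ?thesis .
qed

lemma correctable:
  "\<exists>R. channel n R \<and> (\<forall>X \<in> \<A>. P * dual_map n (R \<circ> kraus_map n Es) X * P = P * X * P)"
proof -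
  let ?M = "mat_adjoint kraus_row * kraus_row"
  obtain U B where U: "U \<in> carrier_mat n (m*n)" and B: "B \<in> carrier_mat (m*n) (m*n)" and Bh: "mat_adjoint B = B"
    and BB: "B * B = ?M" and UB: "U * B = kraus_row" and US: "mat_adjoint U * kraus_row = B"
    and pi: "U * (mat_adjoint U * U) = U" and Bcomm: "\<forall>Y\<in>carrier_mat (m*n) (m*n). Y * ?M = ?M * Y \<longrightarrow> Y * B = B * Y"
    using polar_decomposition[OF kraus_row_carrier] by blast
  define Ks where "Ks = recovery_kraus n m U"
  have Kc: "\<forall>K\<in>set Ks. K \<in> carrier_mat n n" unfolding Ks_def by (rule recovery_kraus_carrier[OF U])
  have "P * dual_map n (kraus_map n Ks \<circ> kraus_map n Es) X * P = P * X * P" if X: "X \<in> \<A>" for X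
  proof -
    have Xc: "X \<in> carrier_mat n n" by (rule A_carrier[OF X])
    have "P * dual_map n (kraus_map n Ks \<circ> kraus_map n Es) X * P = P * kraus_dual n Es (kraus_dual n Ks X) * P"
      using dual_map_kraus_comp[OF Kc Es_carrier _ Xc] by simp
    also have "\<dots> = partial_trace m n (id_tensor m n X * ?M)"
    proof -
      have "id_tensor m n X * B = B * id_tensor m n X" using Bcomm gram_commute_id_tensor[OF X] by auto
      then show ?thesis
        using compress_kraus_dual[OF kraus_dual_carrier[OF Kc Xc]]
          adjoint_mult_kraus_dual_recovery_mult[OF kraus_row_carrier U B Bh UB US BB Xc]
        unfolding Ks_def by simp
    qed
    also have "\<dots> = X * P"
      using partial_trace_id_tensor_mult[OF mult_carrier_mat[OF adjoint_carrier[OF kraus_row_carrier] kraus_row_carrier] Xc]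
      unfolding partial_trace_gram .
    also have "\<dots> = P * X * P"
      using A_compressed[OF X] P_carrier Xc P_idem by (metis assoc_mult_sq mult_carrier_sq)
    finally show ?thesis .
  qed
  then show ?thesis using channel_kraus_map[OF Kc] kraus_dual_recovery_kraus_one[OF U pi] unfolding Ks_def by blast
qed

end

theorem theorem2:
  fixes n :: nat and P :: "complex mat" and Es :: "complex mat list"
    and \<A> :: "complex mat set"
  assumes "orth_proj n P"
    and "\<forall>E \<in> set Es. E \<in> carrier_mat n n"
    and "msum n (map (\<lambda>E. mat_adjoint E * E) Es) = 1\<^sub>m n"
    and "star_subalgebra_on n P \<A>"
  shows "(\<exists>R. channel n R \<and>
            (\<forall>X \<in> \<A>. P * dual_map n (R \<circ> kraus_map n Es) X * P = P * X * P))
     \<longleftrightarrow> (\<forall>X \<in> \<A>. \<forall>b < length Es. \<forall>c < length Es.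
            (P * mat_adjoint (Es ! c) * (Es ! b) * P) * X = X * (P * mat_adjoint (Es ! c) * (Es ! b) * P))"
    (is "?correctable \<longleftrightarrow> ?commute")
proof
  assume ?correctable
  then show ?commute using correctable_imp_commute assms by blast
next
  assume ?commute
  then interpret kl_condition n P Es \<A> using assms by unfold_locales
  show ?correctable by (rule correctable)
qed

end
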